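(* Fix $0<c<1$. Let $d=d(n)$ with $d=o(n)$ (and $dn$ even). Then, as $n\to\infty$, \[ -O\left(\frac{1}{\log \frac{n}{d}}\right) \leq \frac{\log \lvert\mathcal{G}_{d,c}(n)\rvert}{\frac{dn}{2} \log \frac{n}{d+1}} - \left(1 - c\cdot \frac{d-1}{d+1}\right) \leq c\,\frac{\log d}{\log \frac{n}{d+1}} + O\left(\frac{1}{\log \frac{n}{d}}\right).\]
   Context: For $n,d$ let $T_{\max}=T_{\max}(n,d)=\binom{d}{2}\frac{n}{3}$ (the maximum number of triangles of an $n$-vertex $d$-regular graph). $\mathcal{G}_{d,c}(n)$ denotes the set of (simple) $d$-regular graphs on the $n$ labeled nodes $\{1,\dots,n\}$ that contain at least $c\cdot T_{\max}$ triangles. Throughout, $d=o(n)$. *)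

theory Defs
  imports Complex_Main "HOL-Library.Landau_Symbols"
begin

definition regular_graphs :: "nat \<Rightarrow> nat \<Rightarrow> nat set set set" where
  "regular_graphs n d =
     {E. E \<subseteq> {e. e \<subseteq> {1..n} \<and> card e = 2} \<and>
         (\<forall>v\<in>{1..n}. card {e\<in>E. v \<in> e} = d)}"

definition triangles :: "nat set set \<Rightarrow> nat set set" where
  "triangles E = {T. card T = 3 \<and> (\<forall>e. e \<subseteq> T \<and> card e = 2 \<longrightarrow> e \<in> E)}"

definition T_max :: "nat \<Rightarrow> nat \<Rightarrow> real" where
  "T_max n d = real (d choose 2) * real n / 3"

definition G_dc :: "nat \<Rightarrow> real \<Rightarrow> nat \<Rightarrow> nat set set set" where
  "G_dc d c n = {E \<in> regular_graphs n d. real (card (triangles E)) \<ge> c * T_max n d}"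

end

theory Submission
  imports Defs "HOL-Combinatorics.Permutations"
begin

(*
  Lower bound: about k = cn/(d+1) vertex-disjoint copies of K_(d+1) already carry c T_max
  triangles; they are completed to a d-regular graph on n vertices by the union of d^2 perfect
  matchings between two sets of d s vertices, s ~ (1-c)n/(2d), plus a small circulant filler.
  The d permutations placing the cliques and the d^2 matchings can be chosen freely, which gives
  at least (k!)^d (s!)^(d^2) graphs in G_{d,c}(n), and k! >= (k/e)^k turns this into the bound.

  Upper bound: under a vertex order sigma, call an edge covered if some common neighbour of its
  endpoints precedes both.  An edge with K common neighbours is covered in a K/(K+2) >= K/(d+1)
  fraction of the n! orders, and the sum of K over all edges counts each triangle three times;
  by convexity of exp, every G in G_{d,c}(n) has sum_sigma A^covered(sigma,G) >= n! A^mu with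
  mu = 3 c T_max/(d+1).  Relabelling reduces the double sum over orders and graphs to the
  identity order.  There a graph is encoded by its forward neighbourhoods, and the covered
  forward neighbours of v lie in a set of at most d^2 vertices determined by the earlier
  neighbourhoods, so sum_G A^covered(G) y^|E(G)| <= exp(y n + y (A-1) d^2)^n.  The choice
  A = n/d^2, y = d/n yields the upper bound.
*)

section \<open>Regular graphs\<close>

definition regular_on :: "'a set \<Rightarrow> nat \<Rightarrow> 'a set set \<Rightarrow> bool" where
  "regular_on V d G \<longleftrightarrow> G \<subseteq> {e. e \<subseteq> V \<and> card e = 2} \<and> (\<forall>v\<in>V. card {e\<in>G. v \<in> e} = d)"

lemma regular_graphs_eq_regular_on: "regular_graphs n d = {G. regular_on {1..n} d G}"
  by (auto simp: regular_graphs_def regular_on_def)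

lemma regular_on_card_edges:
  assumes "finite V" "regular_on V d G"
  shows "2 * card G = d * card V"
proof -
  have edge: "\<And>e. e \<in> G \<Longrightarrow> e \<subseteq> V \<and> card e = 2" using assms(2) unfolding regular_on_def by blast
  have "finite G" using assms(1) edge by (intro finite_subset[of G "Pow V"]) auto
  have "d * card V = (\<Sum>v\<in>V. card {e\<in>G. v \<in> e})"
    using assms(2) unfolding regular_on_def by simp
  also have "\<dots> = (\<Sum>v\<in>V. \<Sum>e\<in>G. if v \<in> e then 1 else 0)"
    using \<open>finite G\<close> by (simp add: sum.inter_filter[symmetric])
  also have "\<dots> = (\<Sum>e\<in>G. \<Sum>v\<in>V. if v \<in> e then 1 else 0)" by (rule sum.swap)
  also have "\<dots> = (\<Sum>e\<in>G. card {v\<in>V. v \<in> e})"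
    using assms(1) by (simp add: sum.inter_filter[symmetric])
  also have "\<dots> = (\<Sum>e\<in>G. card e)"
    using edge by (intro sum.cong refl arg_cong[where f = card]) auto
  also have "\<dots> = 2 * card G" using edge by simp
  finally show ?thesis by simp
qed

lemma card_incident_edges_eq_card_nbrs:
  assumes "G \<subseteq> {e. card e = 2}"
  shows "card {e\<in>G. v \<in> e} = card {w. {v,w} \<in> G}"
proof -
  have "bij_betw (\<lambda>w. {v,w}) {w. {v,w} \<in> G} {e\<in>G. v \<in> e}"
  proof (rule bij_betwI')
    fix e assume e: "e \<in> {e\<in>G. v \<in> e}"
    then obtain a b where "e = {a,b}" using assms by (auto simp: card_2_iff)
    with e show "\<exists>w\<in>{w. {v,w} \<in> G}. e = {v,w}" by (auto simp: insert_commute)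
  next
    fix x y assume "x \<in> {w. {v,w} \<in> G}" "y \<in> {w. {v,w} \<in> G}"
    then show "({v, x} = {v, y}) = (x = y)" by (auto simp: doubleton_eq_iff)
  qed auto
  then show ?thesis by (simp add: bij_betw_same_card)
qed

lemma regular_on_relation:
  assumes sym: "\<And>u v. R u v \<Longrightarrow> R v u" and irrefl: "\<And>u. \<not> R u u"
    and dom: "\<And>u v. R u v \<Longrightarrow> u \<in> V" and deg: "\<And>v. v \<in> V \<Longrightarrow> card {w. R v w} = d"
  shows "regular_on V d {{u,v} | u v. R u v}"
proof -
  let ?G = "{{u,v} | u v. R u v}"
  have edge: "{v,w} \<in> ?G \<longleftrightarrow> R v w" for v w
    using sym by (auto simp: doubleton_eq_iff)
  have sub: "?G \<subseteq> {e. e \<subseteq> V \<and> card e = 2}"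
  proof
    fix e assume "e \<in> ?G"
    then obtain u v where e: "e = {u,v}" "R u v" by auto
    then have "u \<noteq> v" using irrefl by auto
    then show "e \<in> {e. e \<subseteq> V \<and> card e = 2}" using e dom sym by auto
  qed
  have "card {e\<in>?G. v \<in> e} = d" if "v \<in> V" for v
  proof -
    have "card {e\<in>?G. v \<in> e} = card {w. {v,w} \<in> ?G}"
      by (rule card_incident_edges_eq_card_nbrs) (use sub in auto)
    then show ?thesis using deg[OF that] by (simp only: edge)
  qed
  with sub show ?thesis unfolding regular_on_def by blast
qed

definition relabel :: "('a \<Rightarrow> 'b) \<Rightarrow> 'a set set \<Rightarrow> 'b set set" where
  "relabel f G = image f ` G"

lemma relabel_relabel: "relabel f (relabel g G) = relabel (f \<circ> g) G"
  unfolding relabel_def by (auto simp: image_comp)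

lemma relabel_id: "relabel id G = G"
  unfolding relabel_def by simp

lemma relabel_inj:
  assumes "inj_on f V" "G \<subseteq> Pow V" "G' \<subseteq> Pow V" "relabel f G = relabel f G'"
  shows "G = G'"
  using inj_onD[OF inj_on_image_Pow[OF inj_on_image_Pow[OF assms(1)]], of G G'] assms(2-4)
  unfolding relabel_def by blast

lemma regular_on_relabel:
  assumes "regular_on V d G" "inj_on f V"
  shows "regular_on (f ` V) d (relabel f G)"
proof -
  have edge: "\<And>e. e \<in> G \<Longrightarrow> e \<subseteq> V \<and> card e = 2" using assms(1) unfolding regular_on_def by blast
  have inj: "inj_on (image f) G"
    using inj_on_image_Pow[OF assms(2)] by (rule inj_on_subset) (use edge in auto)
  have "relabel f G \<subseteq> {e. e \<subseteq> f ` V \<and> card e = 2}"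
  proof
    fix x assume "x \<in> relabel f G"
    then obtain e where e: "e \<in> G" "x = f ` e" unfolding relabel_def by auto
    have "card (f ` e) = card e" using edge[OF e(1)] assms(2) by (meson card_image inj_on_subset)
    then show "x \<in> {e. e \<subseteq> f ` V \<and> card e = 2}" using e edge by auto
  qed
  moreover have "card {e\<in>relabel f G. f u \<in> e} = d" if u: "u \<in> V" for u
  proof -
    have "{e\<in>relabel f G. f u \<in> e} = image f ` {e\<in>G. u \<in> e}"
    proof (intro equalityI subsetI)
      fix x assume "x \<in> {e\<in>relabel f G. f u \<in> e}"
      then obtain e where e: "e \<in> G" "x = f ` e" "f u \<in> f ` e" unfolding relabel_def by auto
      then have "u \<in> e" using u edge[OF e(1)] assms(2) by (auto simp: inj_on_def)
      then show "x \<in> image f ` {e\<in>G. u \<in> e}" using e by auto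
    qed (auto simp: relabel_def)
    also have "card \<dots> = card {e\<in>G. u \<in> e}"
      by (rule card_image, rule inj_on_subset[OF inj]) auto
    finally show ?thesis using assms(1) u unfolding regular_on_def by simp
  qed
  ultimately show ?thesis unfolding regular_on_def by blast
qed

lemma regular_graphs_subset: "G \<in> regular_graphs n d \<Longrightarrow> G \<subseteq> {e. e \<subseteq> {1..n} \<and> card e = 2}"
  by (auto simp: regular_graphs_def)

lemma regular_graphs_edge_vertices:
  assumes "G \<in> regular_graphs n d" "{u,w} \<in> G"
  shows "u \<in> {1..n}" "w \<in> {1..n}" "u \<noteq> w"
proof -
  have "{u,w} \<subseteq> {1..n}" "card {u,w} = 2" using regular_graphs_subset[OF assms(1)] assms(2) by auto
  then show "u \<in> {1..n}" "w \<in> {1..n}" "u \<noteq> w" by (auto simp: card_insert_if split: if_splits)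
qed

lemma regular_graphs_nbrs:
  assumes "G \<in> regular_graphs n d"
  shows "{w. {u,w} \<in> G} \<subseteq> {1..n}" "finite {w. {u,w} \<in> G}"
    "u \<in> {1..n} \<Longrightarrow> card {w. {u,w} \<in> G} = d"
proof -
  show sub: "{w. {u,w} \<in> G} \<subseteq> {1..n}" using regular_graphs_edge_vertices[OF assms] by blast
  then show "finite {w. {u,w} \<in> G}" by (rule finite_subset) simp
  show "u \<in> {1..n} \<Longrightarrow> card {w. {u,w} \<in> G} = d"
    using card_incident_edges_eq_card_nbrs[of G u] assms unfolding regular_graphs_def by auto
qed

lemma regular_graphs_card_edges: "G \<in> regular_graphs n d \<Longrightarrow> card G = d * n div 2"
  using regular_on_card_edges[of "{1..n}" d G] by (simp add: regular_graphs_eq_regular_on)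

lemma finite_regular_graphs: "finite (regular_graphs n d)"
  by (rule finite_subset[of _ "Pow (Pow {1..n})"]) (auto simp: regular_graphs_def)

lemma finite_regular_graph: "G \<in> regular_graphs n d \<Longrightarrow> finite G"
  by (rule finite_subset[of _ "Pow {1..n}"]) (auto simp: regular_graphs_def)

lemma G_dc_subset: "G_dc d c n \<subseteq> regular_graphs n d"
  unfolding G_dc_def by auto

lemma triangles_subset_Pow:
  assumes G: "G \<in> regular_graphs n d"
  shows "triangles G \<subseteq> Pow {1..n}"
proof
  fix T assume T: "T \<in> triangles G"
  then have "card T = 3" and pairs: "\<And>e. e \<subseteq> T \<Longrightarrow> card e = 2 \<Longrightarrow> e \<in> G"
    unfolding triangles_def by auto
  have "x \<in> {1..n}" if "x \<in> T" for x
  proof -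
    have "card (T - {x}) = 2" using \<open>card T = 3\<close> that by (simp add: card_Diff_singleton_if)
    then obtain y where "y \<in> T" "y \<noteq> x" by (auto simp: card_2_iff)
    then have "{x,y} \<in> G" using that by (intro pairs) auto
    then show ?thesis using regular_graphs_edge_vertices[OF G] by blast
  qed
  then show "T \<in> Pow {1..n}" by blast
qed

section \<open>Upper bound: counting graphs by their covered edges\<close>

lemma sum_PiE_prod_Suc:
  fixes W :: "(nat \<Rightarrow> 'b set) \<Rightarrow> nat \<Rightarrow> real"
  assumes locality: "\<And>F F' v. v \<ge> 1 \<Longrightarrow> (\<And>u. u \<in> {1..v} \<Longrightarrow> F u = F' u) \<Longrightarrow> W F v = W F' v"
  shows "(\<Sum>F\<in>PiE {1..Suc k} (\<lambda>v. Pow (S v)). \<Prod>v\<in>{1..Suc k}. W F v)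
    = (\<Sum>g\<in>PiE {1..k} (\<lambda>v. Pow (S v)). (\<Prod>v\<in>{1..k}. W g v) * (\<Sum>X\<in>Pow (S (Suc k)). W (g(Suc k := X)) (Suc k)))"
proof -
  have eq: "{1..Suc k} = insert (Suc k) {1..k}" by auto
  define P where "P = PiE {1..k} (\<lambda>v. Pow (S v))"
  define f where "f = (\<lambda>(X::'b set, g::nat \<Rightarrow> 'b set). g(Suc k := X))"
  have "(\<Sum>F\<in>PiE {1..Suc k} (\<lambda>v. Pow (S v)). \<Prod>v\<in>{1..Suc k}. W F v)
       = (\<Sum>p\<in>Pow (S (Suc k)) \<times> P. \<Prod>v\<in>{1..Suc k}. W (f p) v)"
    unfolding eq PiE_insert_eq P_def f_def by (subst sum.reindex) (auto intro: inj_combinator)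
  also have "\<dots> = (\<Sum>p\<in>Pow (S (Suc k)) \<times> P. W (f p) (Suc k) * (\<Prod>v\<in>{1..k}. W (snd p) v))"
  proof (rule sum.cong[OF refl])
    fix p assume "p \<in> Pow (S (Suc k)) \<times> P"
    obtain X g where p: "p = (X, g)" by (cases p)
    have "(\<Prod>v\<in>{1..k}. W (f p) v) = (\<Prod>v\<in>{1..k}. W (snd p) v)"
      by (rule prod.cong[OF refl], rule locality) (auto simp: p f_def)
    then show "(\<Prod>v\<in>{1..Suc k}. W (f p) v) = W (f p) (Suc k) * (\<Prod>v\<in>{1..k}. W (snd p) v)"
      unfolding eq by simp
  qed
  also have "\<dots> = (\<Sum>X\<in>Pow (S (Suc k)). \<Sum>g\<in>P. W (g(Suc k := X)) (Suc k) * (\<Prod>v\<in>{1..k}. W g v))"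
    by (simp add: sum.cartesian_product f_def split_def)
  also have "\<dots> = (\<Sum>g\<in>P. (\<Prod>v\<in>{1..k}. W g v) * (\<Sum>X\<in>Pow (S (Suc k)). W (g(Suc k := X)) (Suc k)))"
    by (subst sum.swap) (simp add: sum_distrib_left mult.commute)
  finally show ?thesis unfolding P_def .
qed

lemma sum_PiE_prod_le_power:
  fixes W :: "(nat \<Rightarrow> 'b set) \<Rightarrow> nat \<Rightarrow> real"
  assumes nonneg: "\<And>F v. W F v \<ge> 0"
    and locality: "\<And>F F' v. v \<ge> 1 \<Longrightarrow> (\<And>u. u \<in> {1..v} \<Longrightarrow> F u = F' u) \<Longrightarrow> W F v = W F' v"
    and bound: "\<And>F v. v \<in> {1..n} \<Longrightarrow> (\<Sum>X\<in>Pow (S v). W (F(v:=X)) v) \<le> M"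
    and "\<And>v. finite (S v)"
  shows "k \<le> n \<Longrightarrow> (\<Sum>F\<in>PiE {1..k} (\<lambda>v. Pow (S v)). \<Prod>v\<in>{1..k}. W F v) \<le> M ^ k"
proof (induction k)
  case (Suc k)
  have "0 \<le> (\<Sum>X\<in>Pow (S (Suc k)). W ((\<lambda>_. {})(Suc k := X)) (Suc k))" by (rule sum_nonneg) (rule nonneg)
  also have "\<dots> \<le> M" by (rule bound) (use Suc.prems in auto)
  finally have "M \<ge> 0" .
  have "(\<Sum>F\<in>PiE {1..Suc k} (\<lambda>v. Pow (S v)). \<Prod>v\<in>{1..Suc k}. W F v)
      = (\<Sum>g\<in>PiE {1..k} (\<lambda>v. Pow (S v)). (\<Prod>v\<in>{1..k}. W g v) * (\<Sum>X\<in>Pow (S (Suc k)). W (g(Suc k := X)) (Suc k)))"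
    by (rule sum_PiE_prod_Suc[OF locality])
  also have "\<dots> \<le> (\<Sum>g\<in>PiE {1..k} (\<lambda>v. Pow (S v)). (\<Prod>v\<in>{1..k}. W g v) * M)"
    by (rule sum_mono, rule mult_left_mono, rule bound) (use Suc.prems in \<open>auto intro: prod_nonneg nonneg\<close>)
  also have "\<dots> \<le> M ^ k * M"
    unfolding sum_distrib_right[symmetric] by (rule mult_right_mono) (use Suc \<open>M \<ge> 0\<close> in auto)
  finally show ?case by (simp add: mult.commute)
qed simp

lemma sum_Pow_prod_le_exp_sum:
  fixes a :: "'a \<Rightarrow> real"
  assumes "finite I" "\<And>i. i \<in> I \<Longrightarrow> a i \<ge> 0"
  shows "(\<Sum>X\<in>Pow I. \<Prod>i\<in>X. a i) \<le> exp (\<Sum>i\<in>I. a i)"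
proof -
  have "(\<Sum>X\<in>Pow I. \<Prod>i\<in>X. a i) = (\<Prod>i\<in>I. a i + 1)"
    by (simp add: prod_add[OF assms(1)])
  also have "\<dots> \<le> (\<Prod>i\<in>I. exp (a i))"
    by (rule prod_mono) (use assms(2) in \<open>auto simp: add.commute\<close>)
  also have "\<dots> = exp (\<Sum>i\<in>I. a i)" by (simp add: exp_sum assms(1))
  finally show ?thesis .
qed

definition forward_nbrs :: "nat set set \<Rightarrow> nat \<Rightarrow> nat set" where
  "forward_nbrs G v = {w. {v,w} \<in> G \<and> v < w}"

definition forward_encoding :: "nat \<Rightarrow> nat set set \<Rightarrow> nat \<Rightarrow> nat set" where
  "forward_encoding n G = restrict (forward_nbrs G) {1..n}"

definition covered :: "(nat \<Rightarrow> nat) \<Rightarrow> nat set set \<Rightarrow> nat set \<Rightarrow> bool" where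
  "covered \<sigma> G e \<longleftrightarrow> (\<exists>u. \<forall>x\<in>e. {u,x} \<in> G \<and> \<sigma> u < \<sigma> x)"

definition covered_count :: "(nat \<Rightarrow> nat) \<Rightarrow> nat set set \<Rightarrow> nat" where
  "covered_count \<sigma> G = card {e\<in>G. covered \<sigma> G e}"

text \<open>Capping the shadow at the size \<open>d\<^sup>2\<close> it has for encodings of \<open>d\<close>-regular graphs makes the
  per-vertex bound hold for every \<open>F\<close>, so that the sum may run over all sequences of forward
  neighbourhoods.\<close>

definition shadow :: "(nat \<Rightarrow> nat set) \<Rightarrow> nat \<Rightarrow> nat set" where
  "shadow F v = {w. v < w \<and> (\<exists>u\<in>{1..<v}. v \<in> F u \<and> w \<in> F u)}"

definition capped_shadow :: "nat \<Rightarrow> (nat \<Rightarrow> nat set) \<Rightarrow> nat \<Rightarrow> nat set" where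
  "capped_shadow d F v = (if finite (shadow F v) \<and> card (shadow F v) \<le> d*d then shadow F v else {})"

definition vertex_weight :: "nat \<Rightarrow> real \<Rightarrow> real \<Rightarrow> (nat \<Rightarrow> nat set) \<Rightarrow> nat \<Rightarrow> real" where
  "vertex_weight d A y F v = A ^ card (F v \<inter> capped_shadow d F v) * y ^ card (F v)"

lemma sum_card_forward_nbrs:
  assumes G: "G \<subseteq> {e. e \<subseteq> {1..n} \<and> card e = 2}"
  shows "(\<Sum>v\<in>{1..n}. card {w\<in>forward_nbrs G v. Q {v,w}}) = card {e\<in>G. Q e}"
proof -
  let ?S = "Sigma {1..n} (\<lambda>v. {w\<in>forward_nbrs G v. Q {v,w}})"
  have fin: "finite {w\<in>forward_nbrs G v. Q {v,w}}" for v
    by (rule finite_subset[of _ "{1..n}"]) (use G in \<open>auto simp: forward_nbrs_def\<close>)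
  have "(\<Sum>v\<in>{1..n}. card {w\<in>forward_nbrs G v. Q {v,w}}) = card ?S"
    by (rule card_SigmaI[symmetric]) (use fin in auto)
  also have "\<dots> = card {e\<in>G. Q e}"
  proof (rule bij_betw_same_card[of "\<lambda>(v,w). {v,w}"], rule bij_betwI')
    fix p q assume "p \<in> ?S" "q \<in> ?S"
    then show "((case p of (v, w) \<Rightarrow> {v, w}) = (case q of (v, w) \<Rightarrow> {v, w})) = (p = q)"
      by (cases p; cases q) (auto simp: doubleton_eq_iff forward_nbrs_def)
  next
    fix e assume e: "e \<in> {e\<in>G. Q e}"
    then have "card e = 2" "e \<subseteq> {1..n}" using G by auto
    then obtain a b where "e = {a,b}" "a < b"
      by (auto simp: card_2_iff) (metis insert_commute linorder_neqE_nat)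
    then show "\<exists>p\<in>?S. e = (case p of (v, w) \<Rightarrow> {v, w})"
      using e \<open>e \<subseteq> {1..n}\<close> by (intro bexI[of _ "(a,b)"]) (auto simp: forward_nbrs_def)
  qed (auto simp: forward_nbrs_def)
  finally show ?thesis .
qed

lemma shadow_cong: "(\<And>u. u \<in> {1..<v} \<Longrightarrow> F u = F' u) \<Longrightarrow> shadow F v = shadow F' v"
  unfolding shadow_def by auto

lemma vertex_weight_cong:
  assumes "\<And>u. u \<in> {1..v} \<Longrightarrow> F u = F' u" "v \<ge> 1"
  shows "vertex_weight d A y F v = vertex_weight d A y F' v"
proof -
  have "shadow F v = shadow F' v" by (rule shadow_cong) (use assms in auto)
  moreover have "F v = F' v" using assms by auto
  ultimately show ?thesis unfolding vertex_weight_def capped_shadow_def by simp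
qed

lemma sum_vertex_weight_le:
  assumes A: "A \<ge> 1" and y: "y \<ge> 0"
  shows "(\<Sum>X\<in>Pow {v<..n}. vertex_weight d A y (F(v:=X)) v) \<le> exp (y * n + y * (A - 1) * (d*d))"
proof -
  define L where "L = capped_shadow d F v"
  have L: "finite L" "card L \<le> d*d" unfolding L_def capped_shadow_def by auto
  have L_upd: "capped_shadow d (F(v:=X)) v = L" for X
    unfolding L_def capped_shadow_def using shadow_cong[of v "F(v:=X)" F] by simp
  define a where "a = (\<lambda>w. y * (if w \<in> L then A else 1))"
  have "(\<Sum>X\<in>Pow {v<..n}. vertex_weight d A y (F(v:=X)) v) = (\<Sum>X\<in>Pow {v<..n}. \<Prod>w\<in>X. a w)"
  proof (rule sum.cong[OF refl])
    fix X assume "X \<in> Pow {v<..n}"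
    then have "finite X" by (auto intro: finite_subset)
    then show "vertex_weight d A y (F(v:=X)) v = (\<Prod>w\<in>X. a w)"
      unfolding vertex_weight_def L_upd a_def by (simp add: prod.distrib prod.If_cases Int_def)
  qed
  also have "\<dots> \<le> exp (\<Sum>w\<in>{v<..n}. a w)"
    by (rule sum_Pow_prod_le_exp_sum) (use A y in \<open>auto simp: a_def\<close>)
  also have "(\<Sum>w\<in>{v<..n}. a w) = (\<Sum>w\<in>{v<..n}. y + (if w \<in> L then y * (A - 1) else 0))"
    unfolding a_def by (rule sum.cong) (auto simp: algebra_simps)
  also have "\<dots> = y * card {v<..n} + y * (A - 1) * card ({v<..n} \<inter> L)"
    by (simp add: sum.distrib sum.If_cases Int_def)
  also have "\<dots> \<le> y * n + y * (A - 1) * (d*d)"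
  proof (rule add_mono)
    show "y * real (card {v<..n}) \<le> y * real n" using y by (intro mult_left_mono) auto
    have "card ({v<..n} \<inter> L) \<le> d * d" using L by (meson card_mono inf_le2 le_trans)
    then show "y * (A - 1) * real (card ({v<..n} \<inter> L)) \<le> y * (A - 1) * real (d * d)"
      using y A by (intro mult_left_mono) (auto simp del: of_nat_mult)
  qed
  finally show ?thesis by (simp add: fun_upd_def)
qed

lemma shadow_forward_encoding_subset:
  assumes G: "G \<in> regular_graphs n d" and v: "v \<in> {1..n}"
  shows "shadow (forward_encoding n G) v \<subseteq> (\<Union>u\<in>{w. {v,w} \<in> G}. {w. {u,w} \<in> G})"
proof
  fix w assume "w \<in> shadow (forward_encoding n G) v"
  then obtain u where "u \<in> {1..<v}" "v \<in> forward_encoding n G u" "w \<in> forward_encoding n G u"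
    unfolding shadow_def by auto
  then have "{u,v} \<in> G" "{u,w} \<in> G" using v by (auto simp: forward_encoding_def forward_nbrs_def)
  then show "w \<in> (\<Union>u\<in>{w. {v,w} \<in> G}. {w. {u,w} \<in> G})" by (auto simp: insert_commute)
qed

lemma capped_shadow_forward_encoding:
  assumes G: "G \<in> regular_graphs n d" and v: "v \<in> {1..n}"
  shows "capped_shadow d (forward_encoding n G) v = shadow (forward_encoding n G) v"
proof -
  let ?N = "\<lambda>u. {w. {u,w} \<in> G}"
  have "card (\<Union>u\<in>?N v. ?N u) \<le> (\<Sum>u\<in>?N v. card (?N u))"
    by (rule card_UN_le) (rule regular_graphs_nbrs(2)[OF G])
  also have "\<dots> = (\<Sum>u\<in>?N v. d)"
    by (rule sum.cong[OF refl], rule regular_graphs_nbrs(3)[OF G]) (use regular_graphs_nbrs(1)[OF G, of v] in auto)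
  also have "\<dots> = d * d" using regular_graphs_nbrs(3)[OF G v] by simp
  finally have "card (\<Union>u\<in>?N v. ?N u) \<le> d * d" .
  moreover have fin: "finite (\<Union>u\<in>?N v. ?N u)" using regular_graphs_nbrs(2)[OF G] by auto
  note sub = shadow_forward_encoding_subset[OF G v]
  ultimately have "card (shadow (forward_encoding n G) v) \<le> d * d"
    using card_mono[OF fin sub] by linarith
  moreover have "finite (shadow (forward_encoding n G) v)" using finite_subset[OF sub fin] .
  ultimately show ?thesis unfolding capped_shadow_def by simp
qed

lemma forward_encoding_inter_shadow:
  assumes G: "G \<in> regular_graphs n d" and v: "v \<in> {1..n}"
  shows "forward_encoding n G v \<inter> shadow (forward_encoding n G) v = {w\<in>forward_nbrs G v. covered id G {v,w}}"
proof (intro equalityI subsetI)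
  fix w assume "w \<in> forward_encoding n G v \<inter> shadow (forward_encoding n G) v"
  then obtain u where u: "u \<in> {1..<v}" "v \<in> forward_encoding n G u" "w \<in> forward_encoding n G u"
    and w: "w \<in> forward_nbrs G v"
    using v unfolding shadow_def forward_encoding_def by auto
  then have "{u,v} \<in> G" "{u,w} \<in> G" "u < v" "u < w" using v by (auto simp: forward_encoding_def forward_nbrs_def)
  then show "w \<in> {w\<in>forward_nbrs G v. covered id G {v,w}}"
    using w unfolding covered_def by auto
next
  fix w assume w: "w \<in> {w\<in>forward_nbrs G v. covered id G {v,w}}"
  then obtain u where u: "{u,v} \<in> G" "{u,w} \<in> G" "u < v" "u < w" unfolding covered_def by auto
  have "u \<in> {1..n}" using regular_graphs_edge_vertices[OF G u(1)] by auto
  then show "w \<in> forward_encoding n G v \<inter> shadow (forward_encoding n G) v"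
    using u w v unfolding shadow_def forward_encoding_def forward_nbrs_def by auto
qed

lemma prod_vertex_weight_forward_encoding:
  fixes A y :: real
  assumes G: "G \<in> regular_graphs n d"
  shows "(\<Prod>v\<in>{1..n}. vertex_weight d A y (forward_encoding n G) v) = A ^ covered_count id G * y ^ card G"
proof -
  have "(\<Prod>v\<in>{1..n}. vertex_weight d A y (forward_encoding n G) v)
      = (\<Prod>v\<in>{1..n}. A ^ card {w\<in>forward_nbrs G v. covered id G {v,w}} * y ^ card {w\<in>forward_nbrs G v. True})"
    by (rule prod.cong[OF refl])
      (simp add: vertex_weight_def capped_shadow_forward_encoding[OF G] forward_encoding_inter_shadow[OF G],
       simp add: forward_encoding_def)
  also have "\<dots> = A ^ (\<Sum>v\<in>{1..n}. card {w\<in>forward_nbrs G v. covered id G {v,w}})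
                 * y ^ (\<Sum>v\<in>{1..n}. card {w\<in>forward_nbrs G v. True})"
    by (simp add: power_sum prod.distrib)
  also have "\<dots> = A ^ covered_count id G * y ^ card G"
    using sum_card_forward_nbrs[OF regular_graphs_subset[OF G], of "\<lambda>_. True"]
    unfolding sum_card_forward_nbrs[OF regular_graphs_subset[OF G]] covered_count_def by simp
  finally show ?thesis .
qed

lemma inj_on_forward_encoding: "inj_on (forward_encoding n) (regular_graphs n d)"
proof (rule inj_onI)
  fix G1 G2 assume G1: "G1 \<in> regular_graphs n d" and G2: "G2 \<in> regular_graphs n d" and eq: "forward_encoding n G1 = forward_encoding n G2"
  have key: "e \<in> G \<longleftrightarrow> (\<exists>a b. e = {a,b} \<and> a \<in> {1..n} \<and> b \<in> forward_encoding n G a)" if G: "G \<in> regular_graphs n d" for G e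
  proof
    assume e: "e \<in> G"
    then have "card e = 2" "e \<subseteq> {1..n}" using regular_graphs_subset[OF G] by auto
    then obtain a b where ab: "e = {a,b}" "a < b"
      by (auto simp: card_2_iff) (metis insert_commute linorder_neqE_nat)
    then show "\<exists>a b. e = {a,b} \<and> a \<in> {1..n} \<and> b \<in> forward_encoding n G a"
      using e \<open>e \<subseteq> {1..n}\<close> by (intro exI[of _ a] exI[of _ b]) (auto simp: forward_encoding_def forward_nbrs_def)
  next
    assume "\<exists>a b. e = {a,b} \<and> a \<in> {1..n} \<and> b \<in> forward_encoding n G a"
    then show "e \<in> G" by (auto simp: forward_encoding_def forward_nbrs_def)
  qed
  show "G1 = G2"
  proof (rule set_eqI)
    fix e show "e \<in> G1 \<longleftrightarrow> e \<in> G2" unfolding key[OF G1] key[OF G2] eq ..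
  qed
qed

lemma covered_generating_function_le:
  fixes A y :: real
  assumes A: "A \<ge> 1" and y: "y \<ge> 0"
  shows "(\<Sum>G\<in>regular_graphs n d. A ^ covered_count id G * y ^ card G) \<le> exp (y * n + y * (A - 1) * (d*d)) ^ n"
proof -
  let ?P = "PiE {1..n} (\<lambda>v. Pow {v<..n})"
  have "(\<Sum>G\<in>regular_graphs n d. A ^ covered_count id G * y ^ card G)
      = (\<Sum>G\<in>regular_graphs n d. \<Prod>v\<in>{1..n}. vertex_weight d A y (forward_encoding n G) v)"
    by (rule sum.cong[OF refl], rule prod_vertex_weight_forward_encoding[symmetric])
  also have "\<dots> = (\<Sum>F\<in>forward_encoding n ` regular_graphs n d. \<Prod>v\<in>{1..n}. vertex_weight d A y F v)"
    by (subst sum.reindex[OF inj_on_forward_encoding]) (simp add: o_def)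
  also have "\<dots> \<le> (\<Sum>F\<in>?P. \<Prod>v\<in>{1..n}. vertex_weight d A y F v)"
  proof (rule sum_mono2)
    show "finite ?P" by (rule finite_PiE) auto
    show "forward_encoding n ` regular_graphs n d \<subseteq> ?P"
    proof
      fix F assume "F \<in> forward_encoding n ` regular_graphs n d"
      then obtain G where G: "G \<in> regular_graphs n d" "F = forward_encoding n G" by auto
      show "F \<in> ?P" unfolding G(2) forward_encoding_def restrict_PiE_iff
        using regular_graphs_subset[OF G(1)] by (auto simp: forward_nbrs_def)
    qed
    show "\<And>b. b \<in> ?P - forward_encoding n ` regular_graphs n d \<Longrightarrow> 0 \<le> (\<Prod>v\<in>{1..n}. vertex_weight d A y b v)"
      using A y by (auto intro!: prod_nonneg simp: vertex_weight_def)
  qed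
  also have "\<dots> \<le> exp (y * n + y * (A - 1) * (d*d)) ^ n"
  proof (rule sum_PiE_prod_le_power[where S = "\<lambda>v. {v<..n}" and n = n])
    show "\<And>F v. 0 \<le> vertex_weight d A y F v" using A y by (auto simp: vertex_weight_def)
    show "\<And>F F' v. 1 \<le> v \<Longrightarrow> (\<And>u. u \<in> {1..v} \<Longrightarrow> F u = F' u) \<Longrightarrow> vertex_weight d A y F v = vertex_weight d A y F' v"
      by (rule vertex_weight_cong) auto
    show "\<And>F v. v \<in> {1..n} \<Longrightarrow> (\<Sum>X\<in>Pow {v<..n}. vertex_weight d A y (F(v := X)) v) \<le> exp (y * n + y * (A - 1) * (d*d))"
      by (rule sum_vertex_weight_le[OF A y])
  qed auto
  finally show ?thesis .
qed

definition perms_min_at :: "'a set \<Rightarrow> 'a set \<Rightarrow> 'a \<Rightarrow> ('a \<Rightarrow> 'a::linorder) set" where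
  "perms_min_at V X z = {\<sigma>. \<sigma> permutes V \<and> (\<forall>y\<in>X-{z}. \<sigma> z < \<sigma> y)}"

lemma finite_perms_min_at: "finite V \<Longrightarrow> finite (perms_min_at V X z)"
  by (rule finite_subset[OF _ finite_permutations[of V]]) (auto simp: perms_min_at_def)

lemma perms_min_at_disjoint:
  assumes "z \<in> X" "z' \<in> X" "z \<noteq> z'"
  shows "perms_min_at V X z \<inter> perms_min_at V X z' = {}"
proof -
  have False if "\<sigma> \<in> perms_min_at V X z" "\<sigma> \<in> perms_min_at V X z'" for \<sigma>
  proof -
    have "\<sigma> z < \<sigma> z'" "\<sigma> z' < \<sigma> z" using that assms unfolding perms_min_at_def by auto
    then show False by simp
  qed
  then show ?thesis by blast
qed

lemma perms_min_at_exists: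
  assumes "finite X" "X \<noteq> {}" "\<sigma> permutes V"
  shows "\<exists>z\<in>X. \<sigma> \<in> perms_min_at V X z"
proof -
  have "Min (\<sigma> ` X) \<in> \<sigma> ` X" using Min_in assms(1,2) by auto
  then obtain z where z: "z \<in> X" "\<sigma> z = Min (\<sigma> ` X)" by auto
  have "\<sigma> z < \<sigma> y" if y: "y \<in> X - {z}" for y
  proof -
    have "\<sigma> z \<le> \<sigma> y" using z y assms(1) by simp
    moreover have "\<sigma> z \<noteq> \<sigma> y" using permutes_inj[OF assms(3)] y by (auto dest: injD)
    ultimately show ?thesis by simp
  qed
  with z(1) assms(3) show ?thesis unfolding perms_min_at_def by blast
qed

lemma card_perms_min_at_le:
  assumes "finite V" "X \<subseteq> V" "z \<in> X" "z' \<in> X"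
  shows "card (perms_min_at V X z) \<le> card (perms_min_at V X z')"
proof -
  let ?t = "Transposition.transpose z z'"
  have "inj_on (\<lambda>\<sigma>. \<sigma> \<circ> ?t) (perms_min_at V X z)"
  proof (rule inj_onI)
    fix s1 s2 assume "s1 \<circ> ?t = s2 \<circ> ?t"
    then have "s1 \<circ> ?t \<circ> ?t = s2 \<circ> ?t \<circ> ?t" by simp
    then show "s1 = s2" by (simp add: comp_assoc)
  qed
  moreover have "(\<lambda>\<sigma>. \<sigma> \<circ> ?t) ` perms_min_at V X z \<subseteq> perms_min_at V X z'"
  proof
    fix s assume "s \<in> (\<lambda>\<sigma>. \<sigma> \<circ> ?t) ` perms_min_at V X z"
    then obtain \<sigma> where \<sigma>: "\<sigma> permutes V" "\<forall>y\<in>X-{z}. \<sigma> z < \<sigma> y" and s: "s = \<sigma> \<circ> ?t"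
      unfolding perms_min_at_def by auto
    have "s permutes V"
      unfolding s by (rule permutes_compose[OF permutes_swap_id \<sigma>(1)]) (use assms in auto)
    moreover have "s z' < s y" if "y \<in> X - {z'}" for y
      using \<sigma>(2) that assms(3,4) by (cases "y = z") (auto simp: s)
    ultimately show "s \<in> perms_min_at V X z'" unfolding perms_min_at_def by auto
  qed
  ultimately show ?thesis by (rule card_inj_on_le) (rule finite_perms_min_at[OF assms(1)])
qed

lemma card_perms_min_at:
  assumes "finite V" "X \<subseteq> V" "z \<in> X"
  shows "card X * card (perms_min_at V X z) = fact (card V)"
proof -
  have "finite X" using finite_subset[OF assms(2,1)] .
  have same: "card (perms_min_at V X z') = card (perms_min_at V X z)" if "z' \<in> X" for z'
    using card_perms_min_at_le[OF assms(1,2) that assms(3)] card_perms_min_at_le[OF assms(1,2) assms(3) that]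
    by (rule le_antisym)
  have "{\<sigma>. \<sigma> permutes V} = (\<Union>z'\<in>X. perms_min_at V X z')"
  proof (intro equalityI subsetI)
    fix \<sigma> assume "\<sigma> \<in> {\<sigma>. \<sigma> permutes V}"
    then show "\<sigma> \<in> (\<Union>z'\<in>X. perms_min_at V X z')"
      using perms_min_at_exists[OF \<open>finite X\<close>, of \<sigma> V] assms(3) by blast
  qed (auto simp: perms_min_at_def)
  then have "fact (card V) = card (\<Union>z'\<in>X. perms_min_at V X z')"
    using card_permutations[OF refl assms(1)] by simp
  also have "\<dots> = (\<Sum>z'\<in>X. card (perms_min_at V X z'))"
    by (rule card_UN_disjoint[OF \<open>finite X\<close>])
      (auto simp: finite_perms_min_at[OF assms(1)] perms_min_at_disjoint)
  also have "\<dots> = card X * card (perms_min_at V X z)" using same by simp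
  finally show ?thesis by simp
qed

lemma card_perms_min_in:
  assumes "finite V" "X \<subseteq> V" "K \<subseteq> X"
  shows "card X * card (\<Union>z\<in>K. perms_min_at V X z) = card K * fact (card V)"
proof (cases "X = {}")
  case False
  have "finite K" using finite_subset[OF assms(3) finite_subset[OF assms(2,1)]] .
  have same: "card X * card (perms_min_at V X z) = fact (card V)" if "z \<in> K" for z
    using card_perms_min_at[OF assms(1,2)] that assms(3) by blast
  have "card (\<Union>z\<in>K. perms_min_at V X z) = (\<Sum>z\<in>K. card (perms_min_at V X z))"
  proof (rule card_UN_disjoint[OF \<open>finite K\<close>])
    show "\<forall>i\<in>K. \<forall>j\<in>K. i \<noteq> j \<longrightarrow> perms_min_at V X i \<inter> perms_min_at V X j = {}"
      using perms_min_at_disjoint[of _ X] assms(3) by blast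
  qed (simp add: finite_perms_min_at[OF assms(1)])
  then have "card X * card (\<Union>z\<in>K. perms_min_at V X z) = (\<Sum>z\<in>K. card X * card (perms_min_at V X z))"
    by (simp add: sum_distrib_left)
  also have "\<dots> = card K * fact (card V)" using same by simp
  finally show ?thesis .
qed (use assms in simp)

definition common_nbrs :: "nat set set \<Rightarrow> nat set \<Rightarrow> nat set" where
  "common_nbrs G e = {u. \<forall>x\<in>e. {u,x} \<in> G}"

lemma common_nbrs_subset:
  assumes "G \<in> regular_graphs n d" "e \<in> G"
  shows "common_nbrs G e \<subseteq> {1..n}"
proof -
  obtain a where "a \<in> e" using regular_graphs_subset[OF assms(1)] assms(2) by (auto simp: card_2_iff)
  then show ?thesis
    using regular_graphs_edge_vertices(1)[OF assms(1)] unfolding common_nbrs_def by blast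
qed

lemma common_nbrs_disjoint:
  assumes "G \<in> regular_graphs n d"
  shows "common_nbrs G e \<inter> e = {}"
  using regular_graphs_edge_vertices(3)[OF assms] unfolding common_nbrs_def by blast

lemma card_common_nbrs_le:
  assumes G: "G \<in> regular_graphs n d" and e: "e \<in> G"
  shows "card (common_nbrs G e) + 2 \<le> d + 1"
proof -
  obtain a b where ab: "e = {a,b}" "a \<noteq> b" using regular_graphs_subset[OF G] e by (auto simp: card_2_iff)
  have "{a,b} \<in> G" using e ab by simp
  note a = regular_graphs_edge_vertices[OF G this]
  have "common_nbrs G e \<subseteq> {w. {a,w} \<in> G} - {b}"
    using ab regular_graphs_edge_vertices(3)[OF G] by (auto simp: common_nbrs_def insert_commute)
  then have "card (common_nbrs G e) \<le> card ({w. {a,w} \<in> G} - {b})"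
    using regular_graphs_nbrs(2)[OF G] by (intro card_mono) auto
  also have "\<dots> = d - 1"
    using regular_graphs_nbrs(2)[OF G] regular_graphs_nbrs(3)[OF G a(1)] \<open>{a,b} \<in> G\<close> by simp
  finally have "card (common_nbrs G e) \<le> d - 1" .
  moreover have "d \<noteq> 0"
  proof
    assume "d = 0"
    then have "{w. {a,w} \<in> G} = {}"
      using regular_graphs_nbrs(2)[OF G] regular_graphs_nbrs(3)[OF G a(1)] by simp
    then show False using \<open>{a,b} \<in> G\<close> by blast
  qed
  ultimately show ?thesis by linarith
qed

lemma covered_iff_perms_min_in:
  assumes G: "G \<in> regular_graphs n d" and e: "e \<in> G" and \<sigma>: "\<sigma> permutes {1..n}"
  shows "covered \<sigma> G e \<longleftrightarrow> \<sigma> \<in> (\<Union>u\<in>common_nbrs G e. perms_min_at {1..n} (common_nbrs G e \<union> e) u)"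
    (is "_ \<longleftrightarrow> \<sigma> \<in> (\<Union>u\<in>?K. perms_min_at _ ?X u)")
proof
  assume "covered \<sigma> G e"
  then obtain u where u: "\<forall>x\<in>e. {u,x} \<in> G \<and> \<sigma> u < \<sigma> x" unfolding covered_def by auto
  then have "u \<in> ?K" unfolding common_nbrs_def by auto
  have "?X \<subseteq> {1..n}" using common_nbrs_subset[OF G e] regular_graphs_subset[OF G] e by auto
  then have "finite ?X" by (rule finite_subset) simp
  then obtain z where z: "z \<in> ?X" "\<sigma> \<in> perms_min_at {1..n} ?X z"
    using perms_min_at_exists[OF _ _ \<sigma>] \<open>u \<in> ?K\<close> by blast
  have "z \<in> ?K"
  proof (rule ccontr)
    assume "z \<notin> ?K"
    then have "z \<in> e" "z \<noteq> u" using z(1) \<open>u \<in> ?K\<close> by auto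
    then have "\<sigma> z < \<sigma> u" using z(2) \<open>u \<in> ?K\<close> unfolding perms_min_at_def by blast
    moreover have "\<sigma> u < \<sigma> z" using u \<open>z \<in> e\<close> by blast
    ultimately show False by simp
  qed
  then show "\<sigma> \<in> (\<Union>u\<in>?K. perms_min_at {1..n} ?X u)" using z(2) by blast
next
  assume "\<sigma> \<in> (\<Union>u\<in>?K. perms_min_at {1..n} ?X u)"
  then obtain u where "u \<in> ?K" "\<forall>y\<in>?X-{u}. \<sigma> u < \<sigma> y" unfolding perms_min_at_def by auto
  moreover have "u \<notin> e" using \<open>u \<in> ?K\<close> common_nbrs_disjoint[OF G] by blast
  ultimately show "covered \<sigma> G e" unfolding covered_def common_nbrs_def by auto
qed

lemma card_perms_covered:
  assumes G: "G \<in> regular_graphs n d" and e: "e \<in> G"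
  shows "(card (common_nbrs G e) + 2) * card {\<sigma>. \<sigma> permutes {1..n} \<and> covered \<sigma> G e}
    = card (common_nbrs G e) * fact n"
proof -
  let ?K = "common_nbrs G e"
  let ?X = "?K \<union> e"
  have "e \<subseteq> {1..n}" "card e = 2" using regular_graphs_subset[OF G] e by auto
  then have "finite e" by (auto intro: finite_subset)
  have "finite ?K" using common_nbrs_subset[OF G e] by (auto intro: finite_subset)
  have "card ?X = card ?K + 2"
    using card_Un_disjoint[OF \<open>finite ?K\<close> \<open>finite e\<close> common_nbrs_disjoint[OF G]] \<open>card e = 2\<close> by simp
  moreover have "{\<sigma>. \<sigma> permutes {1..n} \<and> covered \<sigma> G e} = (\<Union>u\<in>?K. perms_min_at {1..n} ?X u)"
    using covered_iff_perms_min_in[OF G e] by (auto simp: perms_min_at_def)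
  moreover have "?X \<subseteq> {1..n}" using common_nbrs_subset[OF G e] \<open>e \<subseteq> {1..n}\<close> by blast
  ultimately show ?thesis using card_perms_min_in[of "{1..n}" ?X ?K] by simp
qed

lemma sum_covered_count_perms:
  assumes G: "G \<in> regular_graphs n d"
  shows "(\<Sum>\<sigma>\<in>{\<sigma>. \<sigma> permutes {1..n}}. real (covered_count \<sigma> G))
       = fact n * (\<Sum>e\<in>G. real (card (common_nbrs G e)) / (real (card (common_nbrs G e)) + 2))"
proof -
  let ?P = "{\<sigma>. \<sigma> permutes {1..n}}"
  have "finite ?P" by (rule finite_permutations) auto
  have "(\<Sum>\<sigma>\<in>?P. real (covered_count \<sigma> G)) = (\<Sum>\<sigma>\<in>?P. \<Sum>e\<in>G. if covered \<sigma> G e then 1 else 0)"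
    unfolding covered_count_def using finite_regular_graph[OF G] by (simp add: sum.inter_filter[symmetric])
  also have "\<dots> = (\<Sum>e\<in>G. \<Sum>\<sigma>\<in>?P. if covered \<sigma> G e then 1 else 0)" by (rule sum.swap)
  also have "\<dots> = (\<Sum>e\<in>G. real (card {\<sigma>. \<sigma> permutes {1..n} \<and> covered \<sigma> G e}))"
    using \<open>finite ?P\<close> by (simp add: sum.inter_filter[symmetric] Collect_conj_eq[symmetric])
  also have "\<dots> = (\<Sum>e\<in>G. fact n * (real (card (common_nbrs G e)) / (real (card (common_nbrs G e)) + 2)))"
  proof (rule sum.cong[OF refl])
    fix e assume "e \<in> G"
    from arg_cong[OF card_perms_covered[OF G this], of real]
    show "real (card {\<sigma>. \<sigma> permutes {1..n} \<and> covered \<sigma> G e})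
      = fact n * (real (card (common_nbrs G e)) / (real (card (common_nbrs G e)) + 2))"
      by (simp add: field_simps)
  qed
  also have "\<dots> = fact n * (\<Sum>e\<in>G. real (card (common_nbrs G e)) / (real (card (common_nbrs G e)) + 2))"
    by (simp add: sum_distrib_left)
  finally show ?thesis .
qed

text \<open>Each triangle contains three edges, and the third vertex is a common neighbour of each.\<close>

lemma card_triangles_le_sum_common_nbrs:
  assumes G: "G \<in> regular_graphs n d"
  shows "3 * card (triangles G) \<le> (\<Sum>e\<in>G. card (common_nbrs G e))"
proof -
  let ?S = "Sigma (triangles G) (\<lambda>T. {e. e \<subseteq> T \<and> card e = 2})"
  have fin_common: "finite (common_nbrs G e)" if "e \<in> G" for e
    using common_nbrs_subset[OF G that] by (auto intro: finite_subset)
  have "finite (triangles G)"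
    using triangles_subset_Pow[OF G] by (auto intro: finite_subset)
  have card_T: "card T = 3" "finite T" if "T \<in> triangles G" for T
    using that unfolding triangles_def by (auto intro: card_ge_0_finite)
  have "card ?S = (\<Sum>T\<in>triangles G. card {e. e \<subseteq> T \<and> card e = 2})"
    by (rule card_SigmaI) (use \<open>finite (triangles G)\<close> card_T in auto)
  also have "\<dots> = 3 * card (triangles G)"
    by (simp add: n_subsets card_T choose_two)
  finally have card_S: "card ?S = 3 * card (triangles G)" .
  have "?S \<subseteq> (\<lambda>(e,u). (insert u e, e)) ` Sigma G (common_nbrs G)"
  proof
    fix p assume "p \<in> ?S"
    then obtain T e where p: "p = (T,e)" "T \<in> triangles G" "e \<subseteq> T" "card e = 2" by auto
    have edges: "\<And>e'. e' \<subseteq> T \<Longrightarrow> card e' = 2 \<Longrightarrow> e' \<in> G" using p(2) unfolding triangles_def by auto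
    have "card (T - e) = 1"
      using card_T[OF p(2)] p(3,4) by (simp add: card_Diff_subset finite_subset)
    then obtain u where u: "T - e = {u}" by (auto simp: card_1_singleton_iff)
    have "u \<in> common_nbrs G e"
      unfolding common_nbrs_def using u p(3) by (auto intro!: edges simp: card_insert_if)
    moreover have "T = insert u e" using u p(3) by auto
    ultimately show "p \<in> (\<lambda>(e,u). (insert u e, e)) ` Sigma G (common_nbrs G)"
      using p edges by (auto intro!: image_eqI[of _ _ "(e,u)"])
  qed
  moreover have "finite (Sigma G (common_nbrs G))"
    using finite_regular_graph[OF G] fin_common by blast
  ultimately have "card ?S \<le> card ((\<lambda>(e,u). (insert u e, e)) ` Sigma G (common_nbrs G))"
    by (intro card_mono finite_imageI)
  also have "\<dots> \<le> card (Sigma G (common_nbrs G))" by (rule card_image_le) fact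
  also have "\<dots> = (\<Sum>e\<in>G. card (common_nbrs G e))"
    by (rule card_SigmaI) (use finite_regular_graph[OF G] fin_common in auto)
  finally show ?thesis using card_S by simp
qed

lemma card_mult_exp_mean_le:
  fixes t :: "'a \<Rightarrow> real"
  assumes "finite I" "I \<noteq> {}"
  shows "card I * exp ((\<Sum>i\<in>I. t i) / card I) \<le> (\<Sum>i\<in>I. exp (t i))"
proof -
  define m where "m = (\<Sum>i\<in>I. t i) / card I"
  have "card I > 0" using assms by (simp add: card_gt_0_iff)
  have "exp m * (1 + (t i - m)) \<le> exp (t i)" for i
    using exp_ge_add_one_self[of "t i - m"] by (simp add: exp_diff field_simps)
  then have "(\<Sum>i\<in>I. exp m * (1 + (t i - m))) \<le> (\<Sum>i\<in>I. exp (t i))" by (rule sum_mono)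
  moreover have "(\<Sum>i\<in>I. exp m * (1 + (t i - m))) = exp m * (card I + (\<Sum>i\<in>I. t i) - card I * m)"
    by (simp add: sum_distrib_left[symmetric] sum.distrib sum_subtractf)
  moreover have "card I * m = (\<Sum>i\<in>I. t i)" unfolding m_def using \<open>card I > 0\<close> by simp
  ultimately show ?thesis unfolding m_def by (simp add: algebra_simps)
qed

lemma covered_count_relabel:
  assumes \<sigma>: "\<sigma> permutes {1..n}"
  shows "covered_count \<sigma> G = covered_count id (relabel \<sigma> G)"
proof -
  have inj: "inj (image \<sigma>)" using permutes_inj[OF \<sigma>] by (simp add: inj_on_def inj_image_eq_iff)
  have pair: "{\<sigma> u, \<sigma> x} \<in> relabel \<sigma> G \<longleftrightarrow> {u,x} \<in> G" for u x
    using inj_image_mem_iff[OF inj, of "{u,x}" G] by (simp add: relabel_def)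
  have covered_image: "covered id (relabel \<sigma> G) (\<sigma> ` e) \<longleftrightarrow> covered \<sigma> G e" for e
  proof
    assume "covered id (relabel \<sigma> G) (\<sigma> ` e)"
    then obtain u' where u': "\<forall>x\<in>e. {u', \<sigma> x} \<in> relabel \<sigma> G \<and> u' < \<sigma> x" unfolding covered_def by auto
    obtain u where "u' = \<sigma> u" using permutes_surj[OF \<sigma>] by (metis surjD)
    then show "covered \<sigma> G e" using u' pair unfolding covered_def by auto
  next
    assume "covered \<sigma> G e"
    then show "covered id (relabel \<sigma> G) (\<sigma> ` e)" using pair unfolding covered_def by auto
  qed
  have "{e'\<in>relabel \<sigma> G. covered id (relabel \<sigma> G) e'} = image \<sigma> ` {e\<in>G. covered \<sigma> G e}"
    using covered_image unfolding relabel_def by auto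
  moreover have "card (image \<sigma> ` {e\<in>G. covered \<sigma> G e}) = card {e\<in>G. covered \<sigma> G e}"
    by (rule card_image) (rule inj_on_subset[OF inj], simp)
  ultimately show ?thesis unfolding covered_count_def by simp
qed

lemma sum_pow_covered_count_relabel:
  fixes A :: real
  assumes \<sigma>: "\<sigma> permutes {1..n}"
  shows "(\<Sum>G\<in>regular_graphs n d. A ^ covered_count \<sigma> G) = (\<Sum>G\<in>regular_graphs n d. A ^ covered_count id G)"
proof (rule sum.reindex_bij_witness[where j = "relabel \<sigma>" and i = "relabel (inv \<sigma>)"])
  have regular: "relabel f G \<in> regular_graphs n d" if "f permutes {1..n}" "G \<in> regular_graphs n d" for f G
    using regular_on_relabel[of "{1..n}" d G f] that permutes_image[OF that(1)] permutes_inj[OF that(1)]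
    by (auto simp: regular_graphs_eq_regular_on inj_on_subset)
  show "relabel \<sigma> G \<in> regular_graphs n d" "relabel (inv \<sigma>) G \<in> regular_graphs n d"
    if "G \<in> regular_graphs n d" for G
    using regular[OF \<sigma> that] regular[OF permutes_inv[OF \<sigma>] that] by auto
  show "relabel (inv \<sigma>) (relabel \<sigma> G) = G" "relabel \<sigma> (relabel (inv \<sigma>) G) = G" for G
    by (simp_all add: relabel_relabel permutes_inv_o[OF \<sigma>] relabel_id)
  show "A ^ covered_count id (relabel \<sigma> G) = A ^ covered_count \<sigma> G" for G
    using covered_count_relabel[OF \<sigma>] by simp
qed

text \<open>An edge with \<open>K\<close> common neighbours is covered by a \<open>K/(K + 2) \<ge> K/(d + 1)\<close> fraction of the
  orders, and these \<open>K\<close> add up to three times the number of triangles.\<close>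

lemma sum_covered_count_ge:
  assumes G: "G \<in> G_dc d c n"
  shows "fact n * (3 * c * T_max n d / (real d + 1)) \<le> (\<Sum>\<sigma>\<in>{\<sigma>. \<sigma> permutes {1..n}}. real (covered_count \<sigma> G))"
proof -
  have R: "G \<in> regular_graphs n d" using G G_dc_subset by blast
  let ?K = "\<lambda>e. real (card (common_nbrs G e))"
  have "3 * c * T_max n d / (real d + 1) \<le> 3 * real (card (triangles G)) / (real d + 1)"
    using G unfolding G_dc_def by (intro divide_right_mono) auto
  also have "\<dots> \<le> (\<Sum>e\<in>G. ?K e) / (real d + 1)"
    using card_triangles_le_sum_common_nbrs[OF R] by (intro divide_right_mono) (simp_all flip: of_nat_sum)
  also have "\<dots> = (\<Sum>e\<in>G. ?K e / (real d + 1))" by (simp add: sum_divide_distrib)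
  also have "\<dots> \<le> (\<Sum>e\<in>G. ?K e / (?K e + 2))"
  proof (rule sum_mono)
    fix e assume "e \<in> G"
    then have "real (card (common_nbrs G e) + 2) \<le> real (d + 1)"
      using card_common_nbrs_le[OF R] by (simp only: of_nat_le_iff)
    then have "?K e + 2 \<le> real d + 1" by simp
    then show "?K e / (real d + 1) \<le> ?K e / (?K e + 2)" by (intro divide_left_mono) auto
  qed
  finally show ?thesis
    unfolding sum_covered_count_perms[OF R] by (rule mult_left_mono) simp
qed

lemma sum_pow_covered_count_ge:
  assumes G: "G \<in> G_dc d c n" and A: "A \<ge> 1"
  shows "fact n * A powr (3 * c * T_max n d / (real d + 1)) \<le> (\<Sum>\<sigma>\<in>{\<sigma>. \<sigma> permutes {1..n}}. A ^ covered_count \<sigma> G)"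
proof -
  let ?P = "{\<sigma>. \<sigma> permutes {1..n}}"
  let ?\<mu> = "3 * c * T_max n d / (real d + 1)"
  have "finite ?P" "card ?P = fact n" by (simp_all add: finite_permutations card_permutations)
  have "?P \<noteq> {}" using permutes_id[of "{1..n}"] by blast
  have "?\<mu> * ln A \<le> (\<Sum>\<sigma>\<in>?P. real (covered_count \<sigma> G)) / fact n * ln A"
    using sum_covered_count_ge[OF G] A by (intro mult_right_mono) (simp_all add: field_simps)
  also have "\<dots> = (\<Sum>\<sigma>\<in>?P. real (covered_count \<sigma> G) * ln A) / card ?P"
    using \<open>card ?P = fact n\<close> by (simp add: sum_distrib_right)
  finally have "fact n * A powr ?\<mu> \<le> card ?P * exp ((\<Sum>\<sigma>\<in>?P. real (covered_count \<sigma> G) * ln A) / card ?P)"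
    using A \<open>card ?P = fact n\<close> by (simp add: powr_def)
  also have "\<dots> \<le> (\<Sum>\<sigma>\<in>?P. exp (real (covered_count \<sigma> G) * ln A))"
    by (rule card_mult_exp_mean_le) fact+
  also have "\<dots> = (\<Sum>\<sigma>\<in>?P. A ^ covered_count \<sigma> G)"
    using A by (simp add: exp_of_nat_mult)
  finally show ?thesis .
qed

theorem card_G_dc_upper:
  fixes A y :: real
  assumes A: "A \<ge> 1" and y: "y > 0"
  shows "card (G_dc d c n) * A powr (3 * c * T_max n d / (real d + 1)) * y ^ (d*n div 2)
         \<le> exp (y*n + y*(A-1)*(d*d)) ^ n"
proof -
  let ?\<mu> = "3 * c * T_max n d / (real d + 1)"
  let ?P = "{\<sigma>. \<sigma> permutes {1..n}}"
  let ?R = "regular_graphs n d"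
  have "card (G_dc d c n) * (fact n * A powr ?\<mu>) = (\<Sum>G\<in>G_dc d c n. fact n * A powr ?\<mu>)"
    by simp
  also have "\<dots> \<le> (\<Sum>G\<in>G_dc d c n. \<Sum>\<sigma>\<in>?P. A ^ covered_count \<sigma> G)"
    by (rule sum_mono) (rule sum_pow_covered_count_ge[OF _ A])
  also have "\<dots> \<le> (\<Sum>G\<in>?R. \<Sum>\<sigma>\<in>?P. A ^ covered_count \<sigma> G)"
    by (rule sum_mono2[OF finite_regular_graphs G_dc_subset]) (use A in \<open>auto intro!: sum_nonneg\<close>)
  also have "\<dots> = (\<Sum>\<sigma>\<in>?P. \<Sum>G\<in>?R. A ^ covered_count \<sigma> G)" by (rule sum.swap)
  also have "\<dots> = (\<Sum>\<sigma>\<in>?P. \<Sum>G\<in>?R. A ^ covered_count id G)"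
    by (rule sum.cong[OF refl], rule sum_pow_covered_count_relabel) simp
  also have "\<dots> = fact n * (\<Sum>G\<in>?R. A ^ covered_count id G)" by (simp add: card_permutations)
  finally have "card (G_dc d c n) * A powr ?\<mu> \<le> (\<Sum>G\<in>?R. A ^ covered_count id G)"
    by (simp add: mult.left_commute[of "fact n"])
  then have "card (G_dc d c n) * A powr ?\<mu> * y ^ (d*n div 2) \<le> (\<Sum>G\<in>?R. A ^ covered_count id G) * y ^ (d*n div 2)"
    using y by (intro mult_right_mono) auto
  also have "\<dots> = (\<Sum>G\<in>?R. A ^ covered_count id G * y ^ card G)"
    by (simp add: sum_distrib_right regular_graphs_card_edges)
  also have "\<dots> \<le> exp (y*n + y*(A-1)*(d*d)) ^ n"
    using A y by (intro covered_generating_function_le) auto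
  finally show ?thesis by (simp only: of_nat_mult)
qed

section \<open>Lower bound: many \<open>d\<close>-regular graphs with many triangles\<close>

text \<open>The model graph lives on triples. The vertices \<open>(0, j, t)\<close> with \<open>j < k\<close>, \<open>t \<le> d\<close> carry
  \<open>k\<close> disjoint copies of \<open>K\<^bsub>d+1\<^esub>\<close>, the clique \<open>b\<close> having the vertex \<open>(0, S\<^sub>t b, t)\<close> in
  column \<open>t\<close> (with \<open>S\<^sub>0 = id\<close>). The vertices \<open>(1, i, x)\<close> and \<open>(2, i', y)\<close> with \<open>i, i' < d\<close>,
  \<open>x, y < s\<close> carry a \<open>d\<close>-regular bipartite graph, the union of the \<open>d\<^sup>2\<close> perfect matchings
  \<open>x \<mapsto> P (i, i') x\<close>. The vertices \<open>(3, x, 0)\<close> and \<open>(4, y, 0)\<close> with \<open>x, y < m\<close> carry a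
  circulant bipartite \<open>d\<close>-regular graph, used to adjust the number of vertices.\<close>

definition clique_vertex :: "(nat \<Rightarrow> nat \<Rightarrow> nat) \<Rightarrow> nat \<Rightarrow> nat \<Rightarrow> nat" where
  "clique_vertex S b t = (if t = 0 then b else S t b)"

definition clique_index :: "(nat \<Rightarrow> nat \<Rightarrow> nat) \<Rightarrow> nat \<Rightarrow> nat \<Rightarrow> nat" where
  "clique_index S j t = (if t = 0 then j else inv (S t) j)"

definition model_adj :: "nat \<Rightarrow> nat \<Rightarrow> nat \<Rightarrow> nat \<Rightarrow> (nat \<Rightarrow> nat \<Rightarrow> nat) \<Rightarrow> (nat \<times> nat \<Rightarrow> nat \<Rightarrow> nat)
    \<Rightarrow> nat \<times> nat \<times> nat \<Rightarrow> nat \<times> nat \<times> nat \<Rightarrow> bool" where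
  "model_adj k d s m S P u v \<longleftrightarrow>
     (\<exists>j t j' t'. u = (0,j,t) \<and> v = (0,j',t') \<and> j<k \<and> j'<k \<and> t\<le>d \<and> t'\<le>d \<and> (j,t) \<noteq> (j',t')
        \<and> clique_index S j t = clique_index S j' t') \<or>
     (\<exists>i i' x y. i<d \<and> i'<d \<and> x<s \<and> y<s \<and> y = P (i,i') x
        \<and> ((u = (1,i,x) \<and> v = (2,i',y)) \<or> (v = (1,i,x) \<and> u = (2,i',y)))) \<or>
     (\<exists>x y. x<m \<and> y<m \<and> (y+m-x) mod m < d \<and> ((u = (3,x,0) \<and> v = (4,y,0)) \<or> (v = (3,x,0) \<and> u = (4,y,0))))"

definition model_vertices :: "nat \<Rightarrow> nat \<Rightarrow> nat \<Rightarrow> nat \<Rightarrow> (nat \<times> nat \<times> nat) set" where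
  "model_vertices k d s m =
     ({0}\<times>{..<k}\<times>{..d}) \<union> ({1}\<times>{..<d}\<times>{..<s}) \<union> ({2}\<times>{..<d}\<times>{..<s}) \<union> ({3}\<times>{..<m}\<times>{0}) \<union> ({4}\<times>{..<m}\<times>{0})"

definition model_graph :: "nat \<Rightarrow> nat \<Rightarrow> nat \<Rightarrow> nat \<Rightarrow> (nat \<Rightarrow> nat \<Rightarrow> nat) \<Rightarrow> (nat \<times> nat \<Rightarrow> nat \<Rightarrow> nat)
    \<Rightarrow> (nat \<times> nat \<times> nat) set set" where
  "model_graph k d s m S P = {{u,v} | u v. model_adj k d s m S P u v}"

lemma card_model_vertices: "card (model_vertices k d s m) = k*(d+1) + 2*d*s + 2*m"
proof -
  have "card (model_vertices k d s m) = card ({0::nat}\<times>{..<k}\<times>{..d}) + card ({1::nat}\<times>{..<d}\<times>{..<s}) + card ({2::nat}\<times>{..<d}\<times>{..<s}) + card ({3::nat}\<times>{..<m}\<times>{0::nat}) + card ({4::nat}\<times>{..<m}\<times>{0::nat})"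
    unfolding model_vertices_def by (subst card_Un_disjoint, auto)+
  then show ?thesis by (simp add: card_cartesian_product)
qed

lemma model_adj_sym: "model_adj k d s m S P u v \<Longrightarrow> model_adj k d s m S P v u"
  unfolding model_adj_def by (elim disjE exE conjE; metis)

lemma model_adj_irrefl: "\<not> model_adj k d s m S P u u"
  unfolding model_adj_def by auto

lemma model_adj_vertex: "model_adj k d s m S P u v \<Longrightarrow> u \<in> model_vertices k d s m"
  unfolding model_adj_def model_vertices_def by auto

lemma clique_vertex_index:
  assumes HS: "\<forall>t\<in>{1..d}. S t permutes {..<k}" and b: "b < k" and t: "t \<le> d"
  shows "clique_vertex S b t < k \<and> clique_index S (clique_vertex S b t) t = b"
proof (cases "t = 0")
  case True then show ?thesis using b by (simp add: clique_vertex_def clique_index_def)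
next
  case False
  then have p: "S t permutes {..<k}" using HS t by auto
  show ?thesis using False b permutes_in_image[OF p, of b] permutes_inverses[OF p]
    by (simp add: clique_vertex_def clique_index_def)
qed

lemma clique_index_vertex:
  assumes HS: "\<forall>t\<in>{1..d}. S t permutes {..<k}" and j: "j < k" and t: "t \<le> d"
  shows "clique_index S j t < k \<and> clique_vertex S (clique_index S j t) t = j"
proof (cases "t = 0")
  case True then show ?thesis using j by (simp add: clique_vertex_def clique_index_def)
next
  case False
  then have p: "S t permutes {..<k}" using HS t by auto
  have pi: "inv (S t) permutes {..<k}" using p by (rule permutes_inv)
  show ?thesis using False j permutes_in_image[OF pi, of j] permutes_inverses[OF p]
    by (simp add: clique_vertex_def clique_index_def)
qed

lemma clique_index_eq_iff:
  assumes HS: "\<forall>t\<in>{1..d}. S t permutes {..<k}" and "j' < k" "t' \<le> d" "b < k"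
  shows "clique_index S j' t' = b \<longleftrightarrow> j' = clique_vertex S b t'"
  using clique_vertex_index[OF HS, of b t'] clique_index_vertex[OF HS, of j' t'] assms by auto

lemma card_model_nbrs_clique:
  assumes HS: "\<forall>t\<in>{1..d}. S t permutes {..<k}" and j: "j < k" and t: "t \<le> d"
  shows "card {w. model_adj k d s m S P (0,j,t) w} = d"
proof -
  define b where "b = clique_index S j t"
  have b: "b < k" "clique_vertex S b t = j" using clique_index_vertex[OF HS j t] unfolding b_def by auto
  have eq: "{w. model_adj k d s m S P (0,j,t) w} = (\<lambda>t'. (0::nat, clique_vertex S b t', t')) ` ({..d} - {t})"
  proof (intro equalityI subsetI)
    fix w assume "w \<in> {w. model_adj k d s m S P (0,j,t) w}"
    then obtain j' t' where w: "w = (0,j',t')" "j'<k" "t'\<le>d" "(j,t) \<noteq> (j',t')" "clique_index S j t = clique_index S j' t'"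
      unfolding model_adj_def by auto
    then have j': "j' = clique_vertex S b t'" using clique_index_eq_iff[OF HS w(2) w(3) b(1)] unfolding b_def by simp
    then have "t' \<noteq> t" using w(4) b(2) by auto
    then show "w \<in> (\<lambda>t'. (0::nat, clique_vertex S b t', t')) ` ({..d} - {t})" using w j' by auto
  next
    fix w assume "w \<in> (\<lambda>t'. (0::nat, clique_vertex S b t', t')) ` ({..d} - {t})"
    then obtain t' where t': "t' \<le> d" "t' \<noteq> t" "w = (0, clique_vertex S b t', t')" by auto
    have "clique_vertex S b t' < k" "clique_index S (clique_vertex S b t') t' = b" using clique_vertex_index[OF HS b(1) t'(1)] by auto
    then show "w \<in> {w. model_adj k d s m S P (0,j,t) w}"
      unfolding model_adj_def using t' j t b_def by auto
  qed
  have "inj_on (\<lambda>t'. (0::nat, clique_vertex S b t', t')) ({..d} - {t})" by (rule inj_onI) auto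
  then have "card {w. model_adj k d s m S P (0,j,t) w} = card ({..d} - {t})" unfolding eq by (rule card_image)
  also have "\<dots> = d" using t by simp
  finally show ?thesis .
qed

lemma card_model_nbrs_left:
  assumes HP: "\<forall>i<d. \<forall>i'<d. P (i,i') permutes {..<s}" and i: "i < d" and x: "x < s"
  shows "card {w. model_adj k d s m S P (1,i,x) w} = d"
proof -
  have eq: "{w. model_adj k d s m S P (1,i,x) w} = (\<lambda>i'. (2::nat, i', P (i,i') x)) ` {..<d}"
  proof (intro equalityI subsetI)
    fix w assume "w \<in> {w. model_adj k d s m S P (1,i,x) w}"
    then show "w \<in> (\<lambda>i'. (2::nat, i', P (i,i') x)) ` {..<d}" unfolding model_adj_def by auto
  next
    fix w assume "w \<in> (\<lambda>i'. (2::nat, i', P (i,i') x)) ` {..<d}"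
    then obtain i' where i': "i' < d" "w = (2, i', P (i,i') x)" by auto
    have "P (i,i') x < s" using permutes_in_image[of "P (i,i')" "{..<s}" x] HP i i' x by auto
    then show "w \<in> {w. model_adj k d s m S P (1,i,x) w}" unfolding model_adj_def using i i' x by auto
  qed
  have "inj_on (\<lambda>i'. (2::nat, i', P (i,i') x)) {..<d}" by (rule inj_onI) auto
  then show ?thesis unfolding eq by (simp add: card_image)
qed

lemma card_model_nbrs_right:
  assumes HP: "\<forall>i<d. \<forall>i'<d. P (i,i') permutes {..<s}" and i': "i' < d" and y: "y < s"
  shows "card {w. model_adj k d s m S P (2,i',y) w} = d"
proof -
  have eq: "{w. model_adj k d s m S P (2,i',y) w} = (\<lambda>i. (1::nat, i, inv (P (i,i')) y)) ` {..<d}"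
  proof (intro equalityI subsetI)
    fix w assume "w \<in> {w. model_adj k d s m S P (2,i',y) w}"
    then obtain i x where w: "i < d" "x < s" "y = P (i,i') x" "w = (1,i,x)" unfolding model_adj_def by auto
    then have "x = inv (P (i,i')) y" using permutes_inverses[of "P (i,i')" "{..<s}"] HP i' by auto
    then show "w \<in> (\<lambda>i. (1::nat, i, inv (P (i,i')) y)) ` {..<d}" using w by auto
  next
    fix w assume "w \<in> (\<lambda>i. (1::nat, i, inv (P (i,i')) y)) ` {..<d}"
    then obtain i where i: "i < d" "w = (1, i, inv (P (i,i')) y)" by auto
    have p: "P (i,i') permutes {..<s}" using HP i i' by auto
    have "inv (P (i,i')) y < s" using permutes_in_image[OF permutes_inv[OF p], of y] y by auto
    moreover have "P (i,i') (inv (P (i,i')) y) = y" using permutes_inverses[OF p] by auto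
    ultimately show "w \<in> {w. model_adj k d s m S P (2,i',y) w}" unfolding model_adj_def using i i' y
      by auto
  qed
  have "inj_on (\<lambda>i. (1::nat, i, inv (P (i,i')) y)) {..<d}" by (rule inj_onI) auto
  then show ?thesis unfolding eq by (simp add: card_image)
qed

lemma card_filter_permute:
  assumes "inj_on g A" "g ` A = A"
  shows "card {y\<in>A. Q (g y)} = card {z\<in>A. Q z}"
proof -
  have "g ` {y\<in>A. Q (g y)} = {z\<in>A. Q z}" using assms(2) by auto
  moreover have "inj_on g {y\<in>A. Q (g y)}" using assms(1) by (rule inj_on_subset) auto
  ultimately show ?thesis using card_image by metis
qed

lemma mod_add_diff_eq_if:
  fixes x y m :: nat
  assumes "x < m" "y < m"
  shows "(y + m - x) mod m = (if x \<le> y then y - x else y + m - x)"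
proof (cases "x \<le> y")
  case True
  then have "y + m - x = (y - x) + m" by simp
  then have "(y + m - x) mod m = (y - x) mod m" by simp
  then show ?thesis using True assms by simp
qed (use assms in simp)

lemma card_circulant_nbrs:
  fixes x m d :: nat
  assumes "x < m" "d \<le> m"
  shows "card {y\<in>{..<m}. (y + m - x) mod m < d} = d" "card {y\<in>{..<m}. (x + m - y) mod m < d} = d"
proof -
  have "{z\<in>{..<m}. z < d} = {..<d}" using assms(2) by auto
  then have window: "card {z\<in>{..<m}. z < d} = d" by simp
  have inj1: "inj_on (\<lambda>y. (y + m - x) mod m) {..<m}"
  proof (rule inj_onI)
    fix a b assume "a \<in> {..<m}" "b \<in> {..<m}" "(a + m - x) mod m = (b + m - x) mod m"
    then show "a = b"
      using mod_add_diff_eq_if[OF assms(1), of a] mod_add_diff_eq_if[OF assms(1), of b] assms(1)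
      by (auto split: if_splits)
  qed
  have inj2: "inj_on (\<lambda>y. (x + m - y) mod m) {..<m}"
    by (rule inj_onI) (auto simp: mod_add_diff_eq_if assms(1) split: if_splits)
  have "(\<lambda>y. (y + m - x) mod m) ` {..<m} = {..<m}"
    by (rule endo_inj_surj) (use inj1 assms(1) in auto)
  moreover have "(\<lambda>y. (x + m - y) mod m) ` {..<m} = {..<m}"
    by (rule endo_inj_surj) (use inj2 assms(1) in auto)
  ultimately show "card {y\<in>{..<m}. (y + m - x) mod m < d} = d" "card {y\<in>{..<m}. (x + m - y) mod m < d} = d"
    using card_filter_permute[OF inj1, where Q = "\<lambda>z. z < d"] card_filter_permute[OF inj2, where Q = "\<lambda>z. z < d"] window
    by auto
qed

lemma card_model_nbrs_circ_left:
  assumes "x < m" "d \<le> m"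
  shows "card {w. model_adj k d s m S P (3,x,0) w} = d"
proof -
  have "{w. model_adj k d s m S P (3,x,0) w} = (\<lambda>y. (4::nat, y, 0::nat)) ` {y\<in>{..<m}. (y + m - x) mod m < d}"
    unfolding model_adj_def using assms(1) by auto
  moreover have "card \<dots> = card {y\<in>{..<m}. (y + m - x) mod m < d}"
    by (rule card_image) (rule inj_onI, auto)
  ultimately show ?thesis using card_circulant_nbrs(1)[OF assms] by simp
qed

lemma card_model_nbrs_circ_right:
  assumes "y < m" "d \<le> m"
  shows "card {w. model_adj k d s m S P (4,y,0) w} = d"
proof -
  have "{w. model_adj k d s m S P (4,y,0) w} = (\<lambda>x. (3::nat, x, 0::nat)) ` {x\<in>{..<m}. (y + m - x) mod m < d}"
    unfolding model_adj_def using assms(1) by auto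
  moreover have "card \<dots> = card {x\<in>{..<m}. (y + m - x) mod m < d}"
    by (rule card_image) (rule inj_onI, auto)
  ultimately show ?thesis using card_circulant_nbrs(2)[OF assms] by simp
qed

lemma regular_on_model_graph:
  assumes HS: "\<forall>t\<in>{1..d}. S t permutes {..<k}" and HP: "\<forall>i<d. \<forall>i'<d. P (i,i') permutes {..<s}"
    and dm: "d \<le> m"
  shows "regular_on (model_vertices k d s m) d (model_graph k d s m S P)"
  unfolding model_graph_def
proof (rule regular_on_relation)
  show "\<And>u v. model_adj k d s m S P u v \<Longrightarrow> model_adj k d s m S P v u" by (rule model_adj_sym)
  show "\<And>u. \<not> model_adj k d s m S P u u" by (rule model_adj_irrefl)
  show "\<And>u v. model_adj k d s m S P u v \<Longrightarrow> u \<in> model_vertices k d s m" by (rule model_adj_vertex)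
  fix v assume "v \<in> model_vertices k d s m"
  then show "card {w. model_adj k d s m S P v w} = d"
    unfolding model_vertices_def
    using card_model_nbrs_clique[OF HS] card_model_nbrs_left[OF HP] card_model_nbrs_right[OF HP] card_model_nbrs_circ_left[OF _ dm] card_model_nbrs_circ_right[OF _ dm] by auto
qed

lemma model_graph_edge_iff: "{u,v} \<in> model_graph k d s m S P \<longleftrightarrow> model_adj k d s m S P u v"
proof
  assume "{u,v} \<in> model_graph k d s m S P"
  then obtain a b where "{u,v} = {a,b}" "model_adj k d s m S P a b" unfolding model_graph_def by blast
  then show "model_adj k d s m S P u v" using model_adj_sym[of k d s m S P a b] by (auto simp: doubleton_eq_iff)
next
  assume "model_adj k d s m S P u v"
  then show "{u,v} \<in> model_graph k d s m S P" unfolding model_graph_def by blast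
qed

lemma model_graph_subset_Pow: "model_graph k d s m S P \<subseteq> Pow (model_vertices k d s m)"
  unfolding model_graph_def using model_adj_vertex model_adj_sym by blast

lemma model_adj_determines_clique_perm:
  assumes p1: "S1 t permutes {..<k}" and p2: "S2 t permutes {..<k}" and t: "t \<in> {1..d}"
    and R: "\<And>u v. model_adj k d s m S1 P1 u v \<longleftrightarrow> model_adj k d s m S2 P2 u v"
  shows "S1 t = S2 t"
proof
  fix j
  show "S1 t j = S2 t j"
  proof (cases "j < k")
    case False then show ?thesis using permutes_not_in[OF p1] permutes_not_in[OF p2] by simp
  next
    case True
    have jj: "S1 t j < k" using permutes_in_image[OF p1] True by simp
    have "clique_index S1 (S1 t j) t = j" using t permutes_inverses[OF p1] unfolding clique_index_def by auto
    then have "model_adj k d s m S1 P1 (0,j,0) (0, S1 t j, t)"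
      unfolding model_adj_def using True jj t by (auto simp: clique_index_def)
    then have "model_adj k d s m S2 P2 (0,j,0) (0, S1 t j, t)" using R by simp
    then have "j = clique_index S2 (S1 t j) t" unfolding model_adj_def by (auto simp: clique_index_def)
    then have "j = inv (S2 t) (S1 t j)" using t unfolding clique_index_def by auto
    then show ?thesis using permutes_inverses[OF p2] by metis
  qed
qed

lemma model_adj_determines_matching:
  assumes p1: "P1 (i,i') permutes {..<s}" and p2: "P2 (i,i') permutes {..<s}" and "i < d" "i' < d"
    and R: "\<And>u v. model_adj k d s m S1 P1 u v \<longleftrightarrow> model_adj k d s m S2 P2 u v"
  shows "P1 (i,i') = P2 (i,i')"
proof
  fix x
  show "P1 (i,i') x = P2 (i,i') x"
  proof (cases "x < s")
    case False then show ?thesis using permutes_not_in[OF p1] permutes_not_in[OF p2] by simp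
  next
    case True
    have "P1 (i,i') x < s" using permutes_in_image[OF p1] True by simp
    then have "model_adj k d s m S1 P1 (1,i,x) (2,i',P1 (i,i') x)"
      unfolding model_adj_def using True \<open>i < d\<close> \<open>i' < d\<close> by auto
    then have "model_adj k d s m S2 P2 (1,i,x) (2,i',P1 (i,i') x)" using R by simp
    then show ?thesis unfolding model_adj_def using \<open>i < d\<close> \<open>i' < d\<close> by auto
  qed
qed

lemma model_graph_inj:
  assumes S1: "S1 \<in> PiE {1..d} (\<lambda>_. {p. p permutes {..<k}})" and S2: "S2 \<in> PiE {1..d} (\<lambda>_. {p. p permutes {..<k}})"
    and P1: "P1 \<in> PiE ({..<d}\<times>{..<d}) (\<lambda>_. {p. p permutes {..<s}})" and P2: "P2 \<in> PiE ({..<d}\<times>{..<d}) (\<lambda>_. {p. p permutes {..<s}})"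
    and eq: "model_graph k d s m S1 P1 = model_graph k d s m S2 P2"
  shows "S1 = S2 \<and> P1 = P2"
proof -
  have R: "model_adj k d s m S1 P1 u v \<longleftrightarrow> model_adj k d s m S2 P2 u v" for u v
    using model_graph_edge_iff[of u v k d s m S1 P1] model_graph_edge_iff[of u v k d s m S2 P2] eq by simp
  have "S1 t = S2 t" if "t \<in> {1..d}" for t
    using S1 S2 that by (intro model_adj_determines_clique_perm[OF _ _ that R]) auto
  then have "S1 = S2" using S1 S2 by (intro PiE_ext) auto
  moreover have "P1 ii = P2 ii" if "ii \<in> {..<d}\<times>{..<d}" for ii
    using P1 P2 that by (cases ii) (auto intro!: model_adj_determines_matching[OF _ _ _ _ R])
  then have "P1 = P2" using P1 P2 by (intro PiE_ext) auto
  ultimately show ?thesis by simp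
qed

definition clique :: "nat \<Rightarrow> (nat \<Rightarrow> nat \<Rightarrow> nat) \<Rightarrow> nat \<Rightarrow> (nat \<times> nat \<times> nat) set" where
  "clique d S b = (\<lambda>t. (0::nat, clique_vertex S b t, t)) ` {..d}"

lemma model_adj_clique:
  assumes HS: "\<forall>t\<in>{1..d}. S t permutes {..<k}" and b: "b < k"
    and "u \<in> clique d S b" "v \<in> clique d S b" "u \<noteq> v"
  shows "model_adj k d s m S P u v"
proof -
  obtain t t' where "t \<le> d" "t' \<le> d" "u = (0, clique_vertex S b t, t)" "v = (0, clique_vertex S b t', t')"
    using assms(3,4) unfolding clique_def by auto
  with clique_vertex_index[OF HS b] assms(5) show ?thesis unfolding model_adj_def by auto
qed

lemma finite_clique: "finite (clique d S b)"
  by (simp add: clique_def)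

lemma card_clique: "card (clique d S b) = d + 1"
proof -
  have "inj_on (\<lambda>t. (0::nat, clique_vertex S b t, t)) {..d}" by (rule inj_onI) auto
  then show ?thesis unfolding clique_def by (simp add: card_image)
qed

lemma clique_disjoint:
  assumes HS: "\<forall>t\<in>{1..d}. S t permutes {..<k}" and "b < k" "b' < k" "b \<noteq> b'"
  shows "clique d S b \<inter> clique d S b' = {}"
proof -
  have False if "t \<le> d" "clique_vertex S b t = clique_vertex S b' t" for t
    using clique_vertex_index[OF HS \<open>b < k\<close> that(1)] clique_vertex_index[OF HS \<open>b' < k\<close> that(1)]
      that(2) assms(4) by metis
  then show ?thesis unfolding clique_def by auto
qed

lemma clique_subset:
  assumes HS: "\<forall>t\<in>{1..d}. S t permutes {..<k}" and "b < k"
  shows "clique d S b \<subseteq> model_vertices k d s m"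
  using clique_vertex_index[OF HS \<open>b < k\<close>] unfolding clique_def model_vertices_def by auto

lemma triangle_in_relabel_model_graph:
  assumes HS: "\<forall>t\<in>{1..d}. S t permutes {..<k}" and "b < k"
    and T: "T \<subseteq> f ` clique d S b" "card T = 3"
  shows "T \<in> triangles (relabel f (model_graph k d s m S P))"
proof -
  have "e \<in> relabel f (model_graph k d s m S P)" if e: "e \<subseteq> T" "card e = 2" for e
  proof -
    obtain x y where xy: "e = {x,y}" "x \<noteq> y" using e(2) by (auto simp: card_2_iff)
    then have "x \<in> f ` clique d S b" "y \<in> f ` clique d S b" using e(1) T(1) by auto
    then obtain u v where "u \<in> clique d S b" "v \<in> clique d S b" "x = f u" "y = f v" by auto
    with xy have uv: "u \<in> clique d S b" "v \<in> clique d S b" "e = {f u, f v}" "u \<noteq> v" by auto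
    then have "{u,v} \<in> model_graph k d s m S P"
      using model_adj_clique[OF HS \<open>b < k\<close>] model_graph_edge_iff by blast
    then show ?thesis unfolding relabel_def using uv(3) by (intro image_eqI[of _ _ "{u,v}"]) auto
  qed
  then show ?thesis unfolding triangles_def using T(2) by auto
qed

lemma relabel_clique_disjoint:
  assumes HS: "\<forall>t\<in>{1..d}. S t permutes {..<k}" and f: "inj_on f (model_vertices k d s m)"
    and "i < k" "j < k" "i \<noteq> j"
  shows "f ` clique d S i \<inter> f ` clique d S j = {}"
proof -
  have "f ` clique d S i \<inter> f ` clique d S j = f ` (clique d S i \<inter> clique d S j)"
    using inj_on_image_Int[OF f clique_subset[OF HS] clique_subset[OF HS]] assms(3,4) by simp
  also have "\<dots> = {}" using clique_disjoint[OF HS] assms(3-5) by simp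
  finally show ?thesis .
qed

lemma card_triangles_relabel_model_graph:
  assumes HS: "\<forall>t\<in>{1..d}. S t permutes {..<k}" and f: "inj_on f (model_vertices k d s m)"
    and R: "relabel f (model_graph k d s m S P) \<in> regular_graphs n d"
  shows "k * ((d+1) choose 3) \<le> card (triangles (relabel f (model_graph k d s m S P)))"
proof -
  let ?T = "\<lambda>b. {T. T \<subseteq> f ` clique d S b \<and> card T = 3}"
  have fin: "finite (?T b)" for b
    by (rule finite_subset[of _ "Pow (f ` clique d S b)"]) (auto simp: finite_clique)
  have "card (\<Union>b\<in>{..<k}. ?T b) = (\<Sum>b\<in>{..<k}. card (?T b))"
  proof (rule card_UN_disjoint)
    show "\<forall>i\<in>{..<k}. \<forall>j\<in>{..<k}. i \<noteq> j \<longrightarrow> ?T i \<inter> ?T j = {}"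
    proof (intro ballI impI equalityI subsetI)
      fix i j T assume "i \<in> {..<k}" "j \<in> {..<k}" "i \<noteq> j" "T \<in> ?T i \<inter> ?T j"
      then have "T = {}" "card T = 3" using relabel_clique_disjoint[OF HS f, of i j] by auto
      then show "T \<in> {}" by simp
    qed simp
  qed (simp_all add: fin)
  also have "\<dots> = (\<Sum>b\<in>{..<k}. (d+1) choose 3)"
    using card_image[OF inj_on_subset[OF f clique_subset[OF HS]]]
    by (intro sum.cong refl) (simp add: n_subsets card_clique finite_clique)
  finally have "card (\<Union>b\<in>{..<k}. ?T b) = k * ((d+1) choose 3)" by simp
  moreover have "(\<Union>b\<in>{..<k}. ?T b) \<subseteq> triangles (relabel f (model_graph k d s m S P))"
    using triangle_in_relabel_model_graph[OF HS] by blast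
  moreover have "finite (triangles (relabel f (model_graph k d s m S P)))"
    using finite_subset[OF triangles_subset_Pow[OF R]] by simp
  ultimately show ?thesis
    using card_mono[of "triangles (relabel f (model_graph k d s m S P))" "\<Union>b\<in>{..<k}. ?T b"] by simp
qed

lemma relabel_model_graph_in_G_dc:
  assumes HS: "\<forall>t\<in>{1..d}. S t permutes {..<k}" and HP: "\<forall>i<d. \<forall>i'<d. P (i,i') permutes {..<s}"
    and "d \<le> m" and f: "inj_on f (model_vertices k d s m)" "f ` model_vertices k d s m = {1..n}"
    and tri: "c * T_max n d \<le> real (k * ((d+1) choose 3))"
  shows "relabel f (model_graph k d s m S P) \<in> G_dc d c n"
proof -
  have "regular_on (model_vertices k d s m) d (model_graph k d s m S P)"
    by (rule regular_on_model_graph[OF HS HP \<open>d \<le> m\<close>])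
  then have R: "relabel f (model_graph k d s m S P) \<in> regular_graphs n d"
    using regular_on_relabel[OF _ f(1)] f(2) by (simp add: regular_graphs_eq_regular_on)
  then have "real (k * ((d+1) choose 3)) \<le> card (triangles (relabel f (model_graph k d s m S P)))"
    using card_triangles_relabel_model_graph[OF HS f(1)] by (simp only: of_nat_le_iff)
  with R tri show ?thesis unfolding G_dc_def by simp
qed

theorem card_G_dc_ge:
  assumes "d \<le> m" and n: "n = k*(d+1) + 2*d*s + 2*m"
    and tri: "c * T_max n d \<le> real (k * ((d+1) choose 3))"
  shows "fact k ^ d * fact s ^ (d*d) \<le> card (G_dc d c n)"
proof -
  let ?V = "model_vertices k d s m"
  let ?I = "PiE {1..d} (\<lambda>_. {p. p permutes {..<k}}) \<times> PiE ({..<d}\<times>{..<d}) (\<lambda>_. {p. p permutes {..<s}})"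
  have "finite ?V" "card ?V = n" unfolding n card_model_vertices by (simp_all add: model_vertices_def)
  then obtain f where "bij_betw f ?V {1..n}" using finite_same_card_bij[of ?V "{1..n}"] by auto
  then have f: "inj_on f ?V" "f ` ?V = {1..n}" by (auto simp: bij_betw_def)
  define \<Phi> where "\<Phi> = (\<lambda>(S,P). relabel f (model_graph k d s m S P))"
  have sub: "\<Phi> ` ?I \<subseteq> G_dc d c n"
    unfolding \<Phi>_def by (auto simp: PiE_iff intro!: relabel_model_graph_in_G_dc[OF _ _ \<open>d \<le> m\<close> f tri])
  have inj: "inj_on \<Phi> ?I"
  proof (rule inj_onI)
    fix q1 q2 assume q: "q1 \<in> ?I" "q2 \<in> ?I" "\<Phi> q1 = \<Phi> q2"
    obtain S1 P1 where q1: "q1 = (S1,P1)" by (cases q1)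
    obtain S2 P2 where q2: "q2 = (S2,P2)" by (cases q2)
    have "relabel f (model_graph k d s m S1 P1) = relabel f (model_graph k d s m S2 P2)"
      using q(3) unfolding \<Phi>_def q1 q2 by simp
    then have "model_graph k d s m S1 P1 = model_graph k d s m S2 P2"
      by (rule relabel_inj[OF f(1) model_graph_subset_Pow model_graph_subset_Pow])
    then show "q1 = q2" using model_graph_inj q(1,2) unfolding q1 q2 by blast
  qed
  have "card ?I \<le> card (G_dc d c n)"
    by (rule card_inj_on_le[OF inj sub finite_subset[OF G_dc_subset finite_regular_graphs]])
  moreover have "card ?I = fact k ^ d * fact s ^ (d*d)"
    by (simp add: card_cartesian_product card_PiE card_permutations)
  ultimately show ?thesis by simp
qed

section \<open>Asymptotics\<close>

lemma ln_fact_ge_self: "real k * ln (real k) - real k \<le> ln (fact k)"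
proof (cases "k = 0")
  case False
  have s: "(\<lambda>i. real k ^ i /\<^sub>R fact i) sums exp (real k)" by (rule exp_converges)
  have "(\<Sum>i\<in>{k}. real k ^ i /\<^sub>R fact i) \<le> (\<Sum>i. real k ^ i /\<^sub>R fact i)"
    by (rule sum_le_suminf[OF sums_summable[OF s]]) auto
  then have "real k ^ k / fact k \<le> exp (real k)"
    using sums_unique[OF s] by (simp add: divide_inverse mult.commute)
  then have "real k ^ k \<le> exp (real k) * fact k" by (simp add: divide_le_eq)
  then have "ln (real k ^ k) \<le> ln (exp (real k) * fact k)"
    using False by (subst ln_le_cancel_iff) auto
  then show ?thesis using False by (simp add: ln_realpow ln_mult)
qed simp

lemma ln_fact_ge:
  assumes "0 < \<kappa>" "\<kappa> \<le> real k"
  shows "\<kappa> * (ln \<kappa> - 1) \<le> ln (fact k)"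
proof (cases "ln \<kappa> \<le> 1")
  case True
  then have "\<kappa> * (ln \<kappa> - 1) \<le> 0" using assms(1) by (simp add: mult_nonneg_nonpos)
  also have "\<dots> \<le> ln (fact k)" by (simp add: fact_ge_1)
  finally show ?thesis .
next
  case False
  have "\<kappa> * (ln \<kappa> - 1) \<le> real k * (ln \<kappa> - 1)" using False assms by (intro mult_right_mono) auto
  also have "\<dots> \<le> real k * (ln (real k) - 1)" using assms by (intro mult_left_mono) auto
  also have "\<dots> \<le> ln (fact k)" using ln_fact_ge_self[of k] by (simp add: algebra_simps)
  finally show ?thesis .
qed

lemma mult_ln_div_le:
  assumes "real d \<ge> 1" "real n \<ge> 1"
  shows "real d * ln (real n / (real d + 1)) \<le> real n"
proof -
  have "ln (real n / (real d + 1)) \<le> real n / (real d + 1)" using assms by (intro ln_le_minus_one[THEN order_trans]) auto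
  also have "\<dots> \<le> real n / real d" using assms by (intro divide_left_mono) auto
  finally show ?thesis using assms by (simp add: field_simps)
qed

lemma exists_even_remainder:
  fixes n d k :: nat
  assumes "even (d*n)" "(k+1)*(d+1) \<le> n"
  shows "\<exists>k'\<in>{k, k+1}. even (n - k'*(d+1))"
proof (cases "even (n - k*(d+1))")
  case False
  define r where "r = n - k*(d+1)"
  have n: "n = k*(d+1) + r" and "d + 1 \<le> r" using assms(2) unfolding r_def by (simp_all add: algebra_simps)
  have "odd r" using False unfolding r_def .
  have "even d"
  proof (rule ccontr)
    assume "odd d"
    then have "even n" "even (k*(d+1))" using assms(1) by auto
    then have "even r" using n by (metis even_add)
    then show False using \<open>odd r\<close> by simp
  qed
  have "n - (k+1)*(d+1) = r - (d+1)" using n by (simp add: algebra_simps)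
  moreover have "even (r - (d+1))" using \<open>odd r\<close> \<open>even d\<close> \<open>d + 1 \<le> r\<close> by presburger
  ultimately have "even (n - (k+1)*(d+1))" by simp
  then show ?thesis by blast
qed auto

lemma exists_mult_add_between:
  fixes h d :: nat
  assumes "1 \<le> d" "d \<le> h"
  shows "\<exists>s m. h = d*s + m \<and> d \<le> m \<and> m < 2*d"
proof -
  have "h - d = d * ((h - d) div d) + (h - d) mod d" by simp
  moreover have "(h - d) mod d < d" using assms(1) by simp
  ultimately show ?thesis using assms(2)
    by (intro exI[of _ "(h - d) div d"] exI[of _ "d + (h - d) mod d"]) linarith
qed

text \<open>Parameters for the model graph: about \<open>cn/(d + 1)\<close> cliques, just enough for \<open>c T\<^sub>m\<^sub>a\<^sub>x\<close>
  triangles.\<close>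

lemma exists_model_parameters:
  fixes c :: real and n d :: nat
  assumes d: "d \<ge> 1" and c: "0 < c" and "even (d*n)" and big: "(1-c)*n \<ge> 6*d + 2"
  shows "\<exists>k s m. d \<le> m \<and> m < 2*d \<and> n = k*(d+1) + 2*d*s + 2*m \<and> c*n \<le> real (k*(d+1))
     \<and> real (k*(d+1)) \<le> c*n + 2*(d+1)"
proof -
  define k0 where "k0 = nat \<lceil>c*n/(d+1)\<rceil>"
  have "c*n/(d+1) \<ge> 0" using c by simp
  then have "real k0 = real_of_int \<lceil>c*n/(d+1)\<rceil>" unfolding k0_def by simp
  then have "c*n/(d+1) \<le> k0" "real k0 \<le> c*n/(d+1) + 1" by linarith+
  then have k0: "c*n \<le> real k0 * (d+1)" "real k0 * (d+1) \<le> c*n + (d+1)"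
    by (simp_all add: field_simps)
  then have "real ((k0+1)*(d+1) + 4*d) \<le> real n" using big by (simp add: algebra_simps)
  then have "(k0+1)*(d+1) + 4*d \<le> n" by (simp only: of_nat_le_iff)
  then have "(k0+1)*(d+1) \<le> n" by linarith
  then obtain k where k: "k \<in> {k0, k0+1}" "even (n - k*(d+1))"
    using exists_even_remainder[OF \<open>even (d*n)\<close>] by blast
  have "k*(d+1) + 4*d \<le> n" using k(1) \<open>(k0+1)*(d+1) + 4*d \<le> n\<close> by auto
  define h where "h = (n - k*(d+1)) div 2"
  have n: "n = k*(d+1) + 2*h" using k(2) \<open>k*(d+1) + 4*d \<le> n\<close> unfolding h_def by simp
  then have "d \<le> h" using \<open>k*(d+1) + 4*d \<le> n\<close> by linarith
  then obtain s m where "h = d*s + m" "d \<le> m" "m < 2*d"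
    using exists_mult_add_between[OF d] by blast
  moreover have "c*n \<le> real (k*(d+1))" "real (k*(d+1)) \<le> c*n + 2*(d+1)"
    using k(1) k0 by (auto simp: algebra_simps)
  ultimately show ?thesis using n by (intro exI[of _ k] exI[of _ s] exI[of _ m]) (auto simp: algebra_simps)
qed

lemma T_max_le_clique_triangles:
  assumes "0 \<le> c" "c * n \<le> real (k*(d+1))"
  shows "c * T_max n d \<le> real (k * ((d+1) choose 3))"
proof -
  have "((d+1) choose 3) * 3 = (d+1) * (d choose 2)"
    using Suc_times_binomial_eq[of d 2] by (simp add: numeral_3_eq_3)
  then have "real (((d+1) choose 3) * 3) = real ((d+1) * (d choose 2))" by (rule arg_cong)
  then have "real ((d+1) choose 3) * 3 = (real d + 1) * real (d choose 2)"
    by (simp only: of_nat_mult of_nat_add of_nat_1 of_nat_numeral)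
  moreover have "c * n * real (d choose 2) / 3 \<le> real (k*(d+1)) * real (d choose 2) / 3"
    using assms by (intro divide_right_mono mult_right_mono) auto
  ultimately show ?thesis unfolding T_max_def by (simp add: algebra_simps)
qed

lemma ln_fact_clique_count_ge:
  fixes c N D :: real
  assumes "0 < c" "D \<ge> 1" "N > 0" "c*N/(D+1) \<le> real k"
  shows "c*N*D/(D+1) * (ln (N/(D+1)) + ln c - 1) \<le> D * ln (fact k)"
proof -
  define \<kappa> where "\<kappa> = c*N/(D+1)"
  have "\<kappa> > 0" using assms unfolding \<kappa>_def by simp
  have "ln \<kappa> = ln c + ln (N/(D+1))" unfolding \<kappa>_def using assms by (simp add: ln_mult ln_div)
  then have "D * (\<kappa> * (ln (N/(D+1)) + ln c - 1)) \<le> D * ln (fact k)"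
    using ln_fact_ge[OF \<open>\<kappa> > 0\<close> assms(4)[folded \<kappa>_def]] assms(2)
    by (intro mult_left_mono) (auto simp: algebra_simps)
  moreover have "D * (\<kappa> * X) = c*N*D/(D+1) * X" for X unfolding \<kappa>_def by simp
  ultimately show ?thesis by simp
qed

lemma ln_fact_matching_count_ge:
  fixes c N D :: real
  assumes c: "0 < c" "c < 1" and D: "D \<ge> 1" and big: "16*D \<le> (1-c)*N"
    and s: "((1-c)*N - 8*D)/(2*D) \<le> real s" and DL: "D * ln (N/(D+1)) \<le> N"
  shows "(D/2)*(1-c)*N*(ln (N/(D+1)) - (1 + ln (4/(1-c)))) - 4*D*N \<le> D*D * ln (fact s)"
proof -
  define L where "L = ln (N/(D+1))"
  define a where "a = 1 + ln (4/(1-c))"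
  define \<sigma> where "\<sigma> = ((1-c)*N - 8*D)/(2*D)"
  have "N > 0"
  proof (rule ccontr)
    assume "\<not> N > 0"
    then have "(1-c)*N \<le> 0" using c by (simp add: mult_nonneg_nonpos)
    then show False using big D by linarith
  qed
  have "a \<ge> 0" unfolding a_def using c by simp
  have "(1-c)*N/2/(2*D) \<le> \<sigma>"
    unfolding \<sigma>_def using big D by (intro divide_right_mono) (auto simp: mult.commute)
  then have \<tau>: "(1-c)*N/(4*D) \<le> \<sigma>" "(1-c)*N/(4*D) > 0"
    using D c \<open>N > 0\<close> by simp_all
  have "L - a + 1 \<le> ln ((1-c)*N/(4*D))"
  proof -
    have "L \<le> ln (N/D)" unfolding L_def using \<open>N > 0\<close> D by (simp add: frac_le)
    moreover have "ln ((1-c)*N/(4*D)) = ln (N/D) - ln (4/(1-c))" using c D \<open>N > 0\<close> by (simp add: ln_div ln_mult)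
    ultimately show ?thesis unfolding a_def by simp
  qed
  also have "\<dots> \<le> ln \<sigma>" using \<tau> by simp
  finally have "\<sigma> * (L - a) \<le> \<sigma> * (ln \<sigma> - 1)" using \<tau> by (intro mult_left_mono) auto
  also have "\<dots> \<le> ln (fact s)" using ln_fact_ge[of \<sigma> s] \<tau> s unfolding \<sigma>_def by linarith
  finally have "D*D * (\<sigma> * (L - a)) \<le> D*D * ln (fact s)" by (simp add: mult_left_mono)
  moreover have "D*D * (\<sigma> * (L - a)) = (D/2)*(1-c)*N*(L - a) - 4*D*(D*L) + 4*D*D*a"
    unfolding \<sigma>_def using D by (simp add: field_simps)
  moreover have "4*D*(D*L) \<le> 4*D*N" using DL D unfolding L_def by simp
  moreover have "0 \<le> 4*D*D*a" using D \<open>a \<ge> 0\<close> by simp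
  ultimately show ?thesis unfolding L_def a_def by linarith
qed

lemma lower_bound_combination:
  fixes D N L c a lnC lnk lns :: real
  assumes D: "D \<ge> 1" and "N > 0" and c: "0 < c" "c < 1" and "a \<ge> 0"
    and total: "D * lnk + D*D * lns \<le> lnC"
    and cliques: "c*N*D/(D+1) * (L + ln c - 1) \<le> D * lnk"
    and matchings: "(D/2)*(1-c)*N*(L - a) - 4*D*N \<le> D*D * lns"
  shows "(D*N/2) * L * (1 - c*(D-1)/(D+1)) - (5 - ln c + a/2)*D*N \<le> lnC"
proof -
  define X where "X = c*N*D/(D+1)"
  define Y where "Y = (D/2)*(1-c)*N"
  have "X*L + Y*L = (D*N/2) * L * (1 - c*(D-1)/(D+1))"
    unfolding X_def Y_def using D by (simp add: field_simps)
  moreover have "-(1 - ln c)*D*N \<le> X * (ln c - 1)"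
  proof -
    have "c/(D+1) * (D*N*(1 - ln c)) \<le> 1 * (D*N*(1 - ln c))"
      using c D \<open>N > 0\<close> ln_le_minus_one[OF c(1)] by (intro mult_right_mono) (auto simp: field_simps)
    then have "-(1 * (D*N*(1 - ln c))) \<le> -(c/(D+1) * (D*N*(1 - ln c)))" by (rule le_imp_neg_le)
    also have "\<dots> = X * (ln c - 1)" unfolding X_def using D by (simp add: field_simps)
    finally show ?thesis by (simp add: algebra_simps)
  qed
  moreover have "Y*a \<le> (a/2)*D*N"
  proof -
    have "(1-c) * (D*N*a/2) \<le> 1 * (D*N*a/2)" using c D \<open>N > 0\<close> \<open>a \<ge> 0\<close> by (intro mult_right_mono) auto
    then show ?thesis unfolding Y_def by (simp add: field_simps)
  qed
  moreover have "X*(L + ln c - 1) = X*L + X*(ln c - 1)" "Y*(L - a) = Y*L - Y*a"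
    "(5 - ln c + a/2)*D*N = 4*D*N + (1 - ln c)*D*N + (a/2)*D*N" by (simp_all add: algebra_simps)
  ultimately show ?thesis using total cliques[folded X_def] matchings[folded Y_def] by linarith
qed

lemma exists_G_dc_count_ge:
  fixes c :: real and n d :: nat
  assumes d: "d \<ge> 1" and "0 < c" "even (d*n)" and big: "(1-c)*n \<ge> 6*d + 2"
  obtains k s where "fact k ^ d * fact s ^ (d*d) \<le> card (G_dc d c n)"
    "c*n \<le> real (k*(d+1))" "(1-c)*n - 8*d \<le> 2*d*real s"
proof -
  obtain k s m where "d \<le> m" "m < 2*d" and n: "n = k*(d+1) + 2*d*s + 2*m"
    and k: "c*n \<le> real (k*(d+1))" "real (k*(d+1)) \<le> c*n + 2*(d+1)"
    using exists_model_parameters[OF assms] by blast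
  have "fact k ^ d * fact s ^ (d*d) \<le> card (G_dc d c n)"
    by (rule card_G_dc_ge[OF \<open>d \<le> m\<close> n T_max_le_clique_triangles]) (use \<open>0 < c\<close> k in auto)
  moreover have "real n = real (k*(d+1)) + 2*d*real s + 2*real m" unfolding n by simp
  then have "(1-c)*n - 8*d \<le> 2*d*real s" using k(2) \<open>m < 2*d\<close> d by (simp add: algebra_simps)
  ultimately show ?thesis using that k(1) by blast
qed

lemma large_n_bounds:
  assumes c: "0 < c" "c < 1" and big: "real n \<ge> 30/(c*(1-c)) * real d"
  shows "30 * real d \<le> (1-c) * real n" "120 * real d \<le> real n"
proof -
  have "(1-c) * (30/(c*(1-c)) * real d) \<le> (1-c) * real n"
    using big c by (intro mult_left_mono) simp_all
  moreover have "(1-c) * (30/(c*(1-c)) * real d) = 30 * real d / c" using c by (simp add: field_simps)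
  moreover have "30 * real d * c \<le> 30 * real d * 1" using c by (intro mult_left_mono) auto
  then have "30 * real d \<le> 30 * real d / c" using c by (simp add: field_simps)
  ultimately show "30 * real d \<le> (1-c) * real n" by linarith
  have "0 \<le> (c - 1/2)^2" by simp
  then have "c*(1-c) \<le> 1/4" by (simp add: power2_eq_square algebra_simps)
  then have "30/(1/4) \<le> 30/(c*(1-c))" using c by (intro divide_left_mono) auto
  then have "120 * real d \<le> 30/(c*(1-c)) * real d" by (intro mult_right_mono) auto
  then show "120 * real d \<le> real n" using big by linarith
qed

lemma ln_card_ge_ln_fact_powers:
  assumes "fact k ^ d * fact s ^ (d*d) \<le> card A"
  shows "card A \<ge> 1" "real d * ln (fact k) + real d * real d * ln (fact s) \<le> ln (card A)"
proof -
  have one_le: "(1::nat) \<le> fact k ^ d * fact s ^ (d*d)" by (simp add: fact_ge_1 one_le_power)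
  with assms show "card A \<ge> 1" by linarith
  have "real d * ln (fact k) + real d * real d * ln (fact s) = ln (real (fact k ^ d * fact s ^ (d*d)))"
    by (simp add: ln_mult ln_realpow)
  also have "\<dots> \<le> ln (card A)"
  proof (subst ln_le_cancel_iff)
    show "0 < real (fact k ^ d * fact s ^ (d*d))" using one_le by linarith
    then show "0 < real (card A)" using assms by linarith
  qed (use assms in \<open>simp only: of_nat_le_iff\<close>)
  finally show "real d * ln (fact k) + real d * real d * ln (fact s) \<le> ln (card A)" .
qed

lemma ln_card_G_dc_ge:
  fixes c :: real and n d :: nat
  assumes d: "d \<ge> 1" and c: "0 < c" "c < 1" and "even (d*n)"
    and big: "real n \<ge> 30/(c*(1-c)) * d"
  shows "card (G_dc d c n) \<ge> 1"
    and "(real d * real n / 2) * ln (real n / (real d + 1)) * (1 - c * (real d - 1) / (real d + 1))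
        - (5 - ln c + (1 + ln (4/(1-c)))/2) * real d * real n \<le> ln (card (G_dc d c n))"
proof -
  define D where "D = real d"
  define N where "N = real n"
  have D: "D \<ge> 1" unfolding D_def using d by simp
  have big': "30*D \<le> (1-c)*N" "N > 0"
    using large_n_bounds[OF c big] D unfolding D_def N_def by simp_all
  obtain k s where count: "fact k ^ d * fact s ^ (d*d) \<le> card (G_dc d c n)"
    and k: "c*n \<le> real (k*(d+1))" and s: "(1-c)*n - 8*d \<le> 2*d*real s"
  proof (rule exists_G_dc_count_ge[OF d c(1) \<open>even (d*n)\<close>])
    show "(1-c)*n \<ge> 6*d + 2" using big' D unfolding N_def D_def by linarith
  qed
  note ln_card = ln_card_ge_ln_fact_powers[OF count, folded D_def]
  then show "card (G_dc d c n) \<ge> 1" by simp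
  have "c*N*D/(D+1) * (ln (N/(D+1)) + ln c - 1) \<le> D * ln (fact k)"
    using k c D \<open>N > 0\<close> unfolding N_def D_def by (intro ln_fact_clique_count_ge) (auto simp: field_simps)
  moreover have "(D/2)*(1-c)*N*(ln (N/(D+1)) - (1 + ln (4/(1-c)))) - 4*D*N \<le> D*D * ln (fact s)"
  proof (rule ln_fact_matching_count_ge[OF c D])
    show "16*D \<le> (1-c)*N" using big' D by linarith
    show "((1-c)*N - 8*D)/(2*D) \<le> real s" using s D unfolding N_def D_def by (simp add: field_simps)
    show "D * ln (N/(D+1)) \<le> N" using mult_ln_div_le[of d n] D \<open>N > 0\<close> unfolding D_def N_def by simp
  qed
  ultimately show "(real d * real n / 2) * ln (real n / (real d + 1)) * (1 - c * (real d - 1) / (real d + 1))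
        - (5 - ln c + (1 + ln (4/(1-c)))/2) * real d * real n \<le> ln (card (G_dc d c n))"
    unfolding D_def[symmetric] N_def[symmetric]
    by (intro lower_bound_combination[OF D \<open>N > 0\<close> c _ ln_card(2)]) (use c in simp_all)
qed

lemma real_choose_two: "real (d choose 2) = real d * (real d - 1) / 2"
proof (cases "d = 0")
  case False
  have "even (d * (d - 1))" by (cases "even d") auto
  then have "real (d * (d - 1) div 2) = real (d * (d - 1)) / 2" by (simp add: real_of_nat_div)
  then show ?thesis using False by (simp add: choose_two of_nat_diff)
qed simp

lemma ln_card_G_dc_le_weighted:
  assumes "A \<ge> 1" "y > 0" "even (d*n)" "card (G_dc d c n) \<ge> 1"
  shows "ln (card (G_dc d c n)) + 3 * c * T_max n d / (real d + 1) * ln A + (real d * real n / 2) * ln y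
    \<le> real n * (y * real n + y * (A - 1) * (real d * real d))"
proof -
  let ?C = "real (card (G_dc d c n))"
  have "real (d*n div 2) = real d * real n / 2" using assms(3) by (simp add: real_of_nat_div)
  then have "ln ?C + 3 * c * T_max n d / (real d + 1) * ln A + (real d * real n / 2) * ln y
      = ln (?C * A powr (3 * c * T_max n d / (real d + 1)) * y ^ (d*n div 2))"
    using assms by (simp add: ln_mult ln_realpow ln_powr)
  also have "\<dots> \<le> ln (exp (y * real n + y * (A - 1) * (real d * real d)) ^ n)"
    using card_G_dc_upper[OF assms(1,2), of d c n] assms by (subst ln_le_cancel_iff) auto
  also have "\<dots> = real n * (y * real n + y * (A - 1) * (real d * real d))"
    by (simp add: ln_realpow)
  finally show ?thesis .
qed

lemma balanced_weight_bounds: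
  fixes D N :: real
  assumes D: "D \<ge> 1" and "N > 0"
  shows "(D/N) * (max 1 (N/(D*D)) - 1) * (D*D) \<le> D" "ln (N/D) - ln D \<le> ln (max 1 (N/(D*D)))"
proof -
  show "(D/N) * (max 1 (N/(D*D)) - 1) * (D*D) \<le> D"
  proof (cases "N/(D*D) \<le> 1")
    case False
    then have "(D/N) * (max 1 (N/(D*D)) - 1) * (D*D) = D - D*D*D/N" using D \<open>N > 0\<close> by (simp add: field_simps)
    then show ?thesis using D \<open>N > 0\<close> by simp
  qed (use D in simp)
  have "ln (N/D) - ln D = ln (N/(D*D))" using D \<open>N > 0\<close> by (simp add: ln_div ln_mult)
  also have "\<dots> \<le> ln (max 1 (N/(D*D)))" using D \<open>N > 0\<close> by (subst ln_le_cancel_iff) auto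
  finally show "ln (N/D) - ln D \<le> ln (max 1 (N/(D*D)))" .
qed

text \<open>The weights \<open>A = n/d\<^sup>2\<close> and \<open>y = d/n\<close> balance the two terms of the generating-function bound.\<close>

lemma ln_card_G_dc_le:
  fixes c :: real and n d :: nat
  assumes d: "d \<ge> 1" and "0 \<le> c" "even (d*n)" "n > 0" "card (G_dc d c n) \<ge> 1"
  shows "ln (card (G_dc d c n)) \<le> 2 * real d * real n
     + (real d * real n / 2) * ((1 - c*(real d - 1)/(real d + 1)) * ln (real n / real d)
       + c*(real d - 1)/(real d + 1) * ln (real d))"
proof -
  define D where "D = real d"
  define N where "N = real n"
  define c' where "c' = c*(D - 1)/(D + 1)"
  define A where "A = max 1 (N/(D*D))"
  have D: "D \<ge> 1" and "N > 0" unfolding D_def N_def using assms by simp_all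
  have "c' \<ge> 0" unfolding c'_def using \<open>0 \<le> c\<close> D by simp
  have mu: "3 * c * T_max n d / (D + 1) = c' * (D*N/2)"
    unfolding T_max_def c'_def D_def N_def real_choose_two by (simp add: field_simps)
  have "A \<ge> 1" "D/N > 0" unfolding A_def using D \<open>N > 0\<close> by simp_all
  from ln_card_G_dc_le_weighted[OF this \<open>even (d*n)\<close> \<open>card (G_dc d c n) \<ge> 1\<close>]
  have "ln (card (G_dc d c n)) + 3 * c * T_max n d / (D + 1) * ln A + (D*N/2) * ln (D/N)
    \<le> N * ((D/N) * N + (D/N)*(A-1)*(D*D))"
    unfolding D_def N_def .
  then have main: "ln (card (G_dc d c n)) + c' * (D*N/2) * ln A + (D*N/2) * ln (D/N)
    \<le> N * (D + (D/N)*(A-1)*(D*D))"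
    unfolding mu using \<open>N > 0\<close> by simp
  note weights = balanced_weight_bounds[OF D \<open>N > 0\<close>, folded A_def]
  have "N * (D + (D/N)*(A-1)*(D*D)) \<le> N * (2*D)" using weights(1) \<open>N > 0\<close> by (intro mult_left_mono) auto
  moreover have "N * (2*D) = 2*D*N" by simp
  moreover have "c' * (D*N/2) * (ln (N/D) - ln D) \<le> c' * (D*N/2) * ln A"
    using weights(2) \<open>c' \<ge> 0\<close> D \<open>N > 0\<close> by (intro mult_left_mono) auto
  moreover have "ln (D/N) = - ln (N/D)" using D \<open>N > 0\<close> by (simp add: ln_div)
  then have "(D*N/2) * ln (D/N) = - ((D*N/2) * ln (N/D))" by simp
  ultimately have "ln (card (G_dc d c n)) \<le> 2*D*N + (D*N/2) * ln (N/D) - c' * (D*N/2) * (ln (N/D) - ln D)"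
    using main by linarith
  also have "\<dots> = 2*D*N + (D*N/2) * ((1 - c') * ln (N/D) + c' * ln D)"
    by (simp add: field_simps)
  finally show ?thesis unfolding D_def N_def c'_def .
qed

lemma ln_div_le_twice_ln_div_succ:
  fixes D N :: real
  assumes D: "D \<ge> 1" and N: "N \<ge> 4*D"
  shows "ln (N/D) \<le> 2 * ln (N/(D+1))"
proof -
  have "(D+1)*(D+1) \<le> (2*D)*(2*D)" using D by (intro mult_mono) auto
  also have "\<dots> \<le> N*D" using N D by (simp add: mult_right_mono)
  finally have "N*((D+1)*(D+1)) \<le> N*N*D" using D N by (simp add: mult_left_mono mult.assoc)
  then have "(N/D)*((D+1)*(D+1)) \<le> N*N" using D by (simp add: pos_divide_le_eq)
  then have "N/D \<le> (N/(D+1)) * (N/(D+1))" using D by (simp add: pos_le_divide_eq)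
  then have "ln (N/D) \<le> ln ((N/(D+1)) * (N/(D+1)))" using D N by (subst ln_le_cancel_iff) auto
  also have "\<dots> = 2 * ln (N/(D+1))"
  proof -
    have "N/(D+1) > 0" using D N by simp
    then show ?thesis by (subst ln_mult) auto
  qed
  finally show ?thesis .
qed

lemma ln_div_succ_le_ln_div:
  fixes D N :: real
  assumes "D \<ge> 1" "N > 0"
  shows "ln (N/(D+1)) \<le> ln (N/D)"
  using assms by (subst ln_le_cancel_iff) (auto intro: divide_left_mono)

lemma normalized_lower_error:
  fixes D N K lc c' :: real
  assumes D: "D \<ge> 1" and N: "N \<ge> 4*D" "N/(D+1) > 1" and K: "K \<ge> 0"
    and low: "(D*N/2) * ln (N/(D+1)) * (1 - c') - K*D*N \<le> lc"
  shows "- (4*K) / ln (N/D) \<le> lc / (D*N/2 * ln (N/(D+1))) - (1 - c')"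
proof -
  define L where "L = ln (N/(D+1))"
  have "L > 0" unfolding L_def using N by simp
  have "L \<le> ln (N/D)" unfolding L_def using ln_div_succ_le_ln_div D N by simp
  have "-(4*K)/ln (N/D) \<le> -(2*K/L)"
    using ln_div_le_twice_ln_div_succ[OF D N(1)] \<open>L > 0\<close> \<open>L \<le> ln (N/D)\<close> K
    unfolding L_def by (simp add: field_simps mult_left_mono)
  also have "-(2*K/L) = ((D*N/2) * L * (1 - c') - K*D*N) / (D*N/2 * L) - (1 - c')"
    using D N \<open>L > 0\<close> by (simp add: field_simps)
  also have "\<dots> \<le> lc / (D*N/2 * L) - (1 - c')"
    using low D N \<open>L > 0\<close> unfolding L_def by (intro diff_right_mono divide_right_mono) auto
  finally show ?thesis unfolding L_def .
qed

lemma normalized_upper_error: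
  fixes D N lc c c' :: real
  assumes D: "D \<ge> 1" and N: "N \<ge> 4*D" "N/(D+1) > 1" and c': "0 \<le> c'" "c' \<le> c" "c' \<le> 1"
    and up: "lc \<le> 2*D*N + (D*N/2) * ((1 - c') * ln (N/D) + c' * ln D)"
  shows "lc / (D*N/2 * ln (N/(D+1))) - (1 - c') \<le> c * ln D / ln (N/(D+1)) + 10 / ln (N/D)"
proof -
  define L where "L = ln (N/(D+1))"
  define L0 where "L0 = ln (N/D)"
  have "L > 0" unfolding L_def using N by simp
  have "L0 - L = ln ((D+1)/D)" unfolding L0_def L_def using D N by (simp add: ln_div)
  also have "\<dots> \<le> (D+1)/D - 1" using D by (intro ln_le_minus_one) auto
  also have "\<dots> \<le> 1" using D by (simp add: field_simps)
  finally have "(1 - c') * (L0 - L) \<le> 1"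
    using c' ln_div_succ_le_ln_div[of D N] D N unfolding L_def L0_def by (intro mult_le_one) auto
  moreover have "c' * ln D \<le> c * ln D" using c' D by (intro mult_right_mono) auto
  ultimately have "(1 - c') * (L0 - L) / L + c' * ln D / L \<le> 1/L + c * ln D / L"
    using \<open>L > 0\<close> by (simp add: add_mono divide_right_mono)
  moreover have "lc / (D*N/2 * L) - (1 - c') \<le> 4/L + (1 - c') * (L0 - L) / L + c' * ln D / L"
  proof -
    have "lc / (D*N/2 * L) \<le> (2*D*N + (D*N/2) * ((1 - c') * L0 + c' * ln D)) / (D*N/2 * L)"
      using up D N \<open>L > 0\<close> unfolding L0_def by (intro divide_right_mono) auto
    also have "\<dots> = 4/L + (1 - c') + (1 - c') * (L0 - L) / L + c' * ln D / L"
      using D N \<open>L > 0\<close> by (simp add: field_simps)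
    finally show ?thesis by simp
  qed
  moreover have "5/L \<le> 10/L0"
  proof -
    have "L0 > 0" using \<open>L > 0\<close> ln_div_succ_le_ln_div[of D N] D N unfolding L_def L0_def by simp
    moreover have "5*L0 \<le> 10*L" using ln_div_le_twice_ln_div_succ[OF D N(1)] unfolding L_def L0_def by simp
    ultimately show ?thesis using \<open>L > 0\<close> by (simp add: field_simps)
  qed
  ultimately show ?thesis unfolding L_def[symmetric] L0_def[symmetric] by linarith
qed

definition log_count_excess :: "real \<Rightarrow> nat \<Rightarrow> nat \<Rightarrow> real" where
  "log_count_excess c d n =
     ln (real (card (G_dc d c n))) / (real d * real n / 2 * ln (real n / (real d + 1)))
     - (1 - c * (real d - 1) / (real d + 1))"

lemma log_count_excess_bounds:
  fixes c :: real and n d :: nat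
  assumes d: "d \<ge> 1" and c: "0 < c" "c < 1" and "even (d*n)" and big: "real n \<ge> 30/(c*(1-c)) * d"
  shows "- (4 * (5 - ln c + (1 + ln (4/(1-c)))/2)) / ln (real n / real d) \<le> log_count_excess c d n"
    and "log_count_excess c d n \<le> c * ln (real d) / ln (real n / (real d + 1)) + 10 / ln (real n / real d)"
proof -
  have "120 * real d \<le> real n" using large_n_bounds[OF c big] by simp
  then have N: "real n \<ge> 4 * real d" "real n / (real d + 1) > 1" "n > 0" using d by (simp_all add: field_simps)
  have "ln c \<le> 0" "0 \<le> ln (4/(1-c))" using c by simp_all
  then have K: "0 \<le> 5 - ln c + (1 + ln (4/(1-c)))/2" by simp
  have c': "0 \<le> c * (real d - 1) / (real d + 1)" "c * (real d - 1) / (real d + 1) \<le> c"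
    using c d by (simp_all add: field_simps)
  have "c * (real d - 1) / (real d + 1) \<le> 1" using c'(2) c(2) by linarith
  note card = ln_card_G_dc_ge[OF d c \<open>even (d*n)\<close> big]
  show "- (4 * (5 - ln c + (1 + ln (4/(1-c)))/2)) / ln (real n / real d) \<le> log_count_excess c d n"
    unfolding log_count_excess_def using d N(1,2) K by (intro normalized_lower_error[OF _ _ _ _ card(2)]) auto
  show "log_count_excess c d n \<le> c * ln (real d) / ln (real n / (real d + 1)) + 10 / ln (real n / real d)"
    unfolding log_count_excess_def using d N c' \<open>c * (real d - 1) / (real d + 1) \<le> 1\<close>
    by (intro normalized_upper_error ln_card_G_dc_le \<open>even (d*n)\<close> card(1)) (use c in auto)
qed

theorem theorem1:
  fixes c :: real and d :: "nat \<Rightarrow> nat"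
  assumes "0 < c" "c < 1"
    and "(\<lambda>n. real (d n)) \<in> o(\<lambda>n. real n)"
  shows "\<exists>C::real. \<exists>N::nat. \<forall>n\<ge>N. d n \<ge> 1 \<longrightarrow> even (d n * n) \<longrightarrow>
    (let r = ln (real (card (G_dc (d n) c n))) /
             (real (d n) * real n / 2 * ln (real n / (real (d n) + 1)))
           - (1 - c * (real (d n) - 1) / (real (d n) + 1))
     in - C / ln (real n / real (d n)) \<le> r \<and>
        r \<le> c * ln (real (d n)) / ln (real n / (real (d n) + 1)) + C / ln (real n / real (d n)))"
proof -
  define K where "K = 5 - ln c + (1 + ln (4/(1-c)))/2"
  define C where "C = max 10 (4*K)"
  have "c*(1-c)/30 > 0" using assms(1,2) by simp
  from landau_o.smallD[OF assms(3) this] obtain N0 where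
    N0: "\<And>n. n \<ge> N0 \<Longrightarrow> real (d n) \<le> c*(1-c)/30 * real n"
    unfolding eventually_at_top_linorder by auto
  have "\<forall>n\<ge>N0. d n \<ge> 1 \<longrightarrow> even (d n * n) \<longrightarrow>
    - C / ln (real n / real (d n)) \<le> log_count_excess c (d n) n \<and>
    log_count_excess c (d n) n \<le> c * ln (real (d n)) / ln (real n / (real (d n) + 1)) + C / ln (real n / real (d n))"
  proof (intro allI impI)
    fix n assume "n \<ge> N0" "d n \<ge> 1" "even (d n * n)"
    then have big: "real n \<ge> 30/(c*(1-c)) * d n" using N0[of n] assms(1,2) by (simp add: field_simps)
    have "120 * real (d n) \<le> real n" using large_n_bounds[OF assms(1,2) big] by simp
    then have "ln (real n / real (d n)) > 0" using \<open>d n \<ge> 1\<close> by (simp add: field_simps)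
    then have "- C / ln (real n / real (d n)) \<le> - (4*K) / ln (real n / real (d n))"
      "10 / ln (real n / real (d n)) \<le> C / ln (real n / real (d n))"
      unfolding C_def by (simp_all add: divide_right_mono)
    then show "- C / ln (real n / real (d n)) \<le> log_count_excess c (d n) n \<and>
      log_count_excess c (d n) n \<le> c * ln (real (d n)) / ln (real n / (real (d n) + 1)) + C / ln (real n / real (d n))"
      using log_count_excess_bounds[OF \<open>d n \<ge> 1\<close> assms(1,2) \<open>even (d n * n)\<close> big, folded K_def]
      by linarith
  qed
  then show ?thesis unfolding log_count_excess_def Let_def by blast
qed

end
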